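(* Let $S$ be a 1-safe net system with transition set $T$ and let $\pi=(O,h)$, $O=(C,E,G)$, be its complete prefix unfolding. Let IMPROVED$(S,\pi)$ be the following procedure. Start with $R=\emptyset$. For each $t_1\in T$ and each $t_2\in(t_1\bullet)\bullet$: add $\langle t_1,t_2\rangle$ to $R$ if EarlyConfirm$(t_1,t_2)$ returns true, and otherwise add it if CheckByCuts$(t_1,t_2)$ returns true. Then, for each pair of events $e_1,e_2$ of $\pi$ with $e_1$ co $e_2$, add $\langle h(e_1),h(e_2)\rangle$ and $\langle h(e_2),h(e_1)\rangle$ to $R$. Return $R$. Here EarlyConfirm$(t_1,t_2)$ returns true iff there is an event $e_1$ with $h(e_1)=t_1$ such that either $e_1$ is not a cut-off event and $e_1\triangleright e_2$ for some event $e_2$ with $h(e_2)=t_2$, or $e_1$ is a cut-off event with (non-cut-off) corresponding event $e_1'$ satisfying $h(e_1'\bullet)=h(e_1\bullet)$ and $e_1'\triangleright e_2$ for some event $e_2$ with $h(e_2)=t_2$; and CheckByCuts$(t_1,t_2)$ returns true iff for some event $e_1$ with $h(e_1)=t_1$, letting $B_{prec}=e_1\bullet\cup\{c\in C\mid c\text{ co }e_1,\ h(c)\in\bullet t_2\}$, some subset $X'\subseteq B_{prec}$ that is a maximal (w.r.t. inclusion within $B_{prec}$) set of pairwise co conditions satisfies $\bullet t_2\subseteq h(X')$. Then the set $R$ returned by IMPROVED$(S,\pi)$ is exactly $\{\langle t_1,t_2\rangle\in T\times T\mid t_1<_{tar}t_2\}$.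
   Context: Petri net $N=(P,T,F)$ with pre/post-sets $\bullet x$, $x\bullet$, and for sets $Y\bullet=\bigcup_{y\in Y}y\bullet$, $\bullet Y=\bigcup_{y\in Y}\bullet y$; markings, enabling (all input places marked), firing $M'=M-\bullet t+t\bullet$; net system $S=(N,M_0)$, 1-safe if every reachable marking has at most one token per place. Transition adjacency relation: $t_1<_{tar}t_2$ iff some reachable marking $M_s$ enables $t_1$ and after firing $t_1$ from $M_s$, $t_2$ is enabled. For nodes of an occurrence net: $x<y$ iff a directed path with at least one arc from $x$ to $y$; $x\#y$ iff there are a condition $s$ and paths $s\,t_1\cdots x$, $s\,t_2\cdots y$ with $t_1\ne t_2$; $x$ co $y$ iff none of $x<y,y<x,x\#y$ (also between conditions and events). Configurations, $[e]=\{x\mid x<e\text{ or }x=e\}$, $Cut(\mathcal C)=(Min(O)\cup\mathcal C\bullet)\setminus\bullet\mathcal C$, $Mark(\mathcal C)=h(Cut(\mathcal C))$; with an adequate order $\prec$, $e$ is a cut-off event if some $e'$ has $Mark([e])=Mark([e'])$ and $[e']\prec[e]$ ($e'$ a corresponding event); the complete prefix unfolding is the greatest backward closed subnet of the unfolding containing no events after a cut-off event ($h$ maps conditions to places and events to transitions). $Max(E_0)=\{e\in E_0\mid\forall e'\in E_0:e\not<e'\}$; Max-Event Adjacency: for events $e<f$, $e\triangleright f$ iff $e\in Max(\bullet(\bullet f))$. *)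

theory Defs
  imports Main
begin

section \<open>Petri nets (places and transitions share one node type)\<close>

definition pre :: "('x \<times> 'x) set \<Rightarrow> 'x \<Rightarrow> 'x set" where
  "pre F x = {y. (y, x) \<in> F}"

definition post :: "('x \<times> 'x) set \<Rightarrow> 'x \<Rightarrow> 'x set" where
  "post F x = {y. (x, y) \<in> F}"

definition pre_set :: "('x \<times> 'x) set \<Rightarrow> 'x set \<Rightarrow> 'x set" where
  "pre_set F Y = (\<Union>y\<in>Y. pre F y)"

definition post_set :: "('x \<times> 'x) set \<Rightarrow> 'x set \<Rightarrow> 'x set" where
  "post_set F Y = (\<Union>y\<in>Y. post F y)"

definition petri_net :: "'a set \<Rightarrow> 'a set \<Rightarrow> ('a \<times> 'a) set \<Rightarrow> bool" where
  "petri_net P T F \<longleftrightarrow> finite P \<and> finite T \<and> P \<inter> T = {} \<and>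
     F \<subseteq> (P \<times> T) \<union> (T \<times> P) \<and> (\<forall>t\<in>T. pre F t \<noteq> {})"

definition net_system :: "'a set \<Rightarrow> 'a set \<Rightarrow> ('a \<times> 'a) set \<Rightarrow> ('a \<Rightarrow> nat) \<Rightarrow> bool" where
  "net_system P T F M0 \<longleftrightarrow> petri_net P T F \<and> (\<forall>p. M0 p > 0 \<longrightarrow> p \<in> P)"

definition enabled :: "'a set \<Rightarrow> ('a \<times> 'a) set \<Rightarrow> ('a \<Rightarrow> nat) \<Rightarrow> 'a \<Rightarrow> bool" where
  "enabled T F M t \<longleftrightarrow> t \<in> T \<and> (\<forall>p\<in>pre F t. M p \<ge> 1)"

definition fire :: "('a \<times> 'a) set \<Rightarrow> ('a \<Rightarrow> nat) \<Rightarrow> 'a \<Rightarrow> ('a \<Rightarrow> nat)" where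
  "fire F M t = (\<lambda>p. M p - (if p \<in> pre F t then 1 else 0) + (if p \<in> post F t then 1 else 0))"

inductive_set reach :: "'a set \<Rightarrow> ('a \<times> 'a) set \<Rightarrow> ('a \<Rightarrow> nat) \<Rightarrow> ('a \<Rightarrow> nat) set"
  for T F M0 where
    reach_init: "M0 \<in> reach T F M0"
  | reach_step: "M \<in> reach T F M0 \<Longrightarrow> enabled T F M t \<Longrightarrow> fire F M t \<in> reach T F M0"

definition one_safe :: "'a set \<Rightarrow> ('a \<times> 'a) set \<Rightarrow> ('a \<Rightarrow> nat) \<Rightarrow> bool" where
  "one_safe T F M0 \<longleftrightarrow> (\<forall>M\<in>reach T F M0. \<forall>p. M p \<le> 1)"

definition tar :: "'a set \<Rightarrow> ('a \<times> 'a) set \<Rightarrow> ('a \<Rightarrow> nat) \<Rightarrow> 'a \<Rightarrow> 'a \<Rightarrow> bool" where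
  "tar T F M0 t1 t2 \<longleftrightarrow>
     (\<exists>Ms\<in>reach T F M0. enabled T F Ms t1 \<and> enabled T F (fire F Ms t1) t2)"

definition lt :: "('n \<times> 'n) set \<Rightarrow> 'n \<Rightarrow> 'n \<Rightarrow> bool" where
  "lt G x y \<longleftrightarrow> (x, y) \<in> G\<^sup>+"

definition conflict :: "'n set \<Rightarrow> ('n \<times> 'n) set \<Rightarrow> 'n \<Rightarrow> 'n \<Rightarrow> bool" where
  "conflict Cs G x y \<longleftrightarrow> (\<exists>s\<in>Cs. \<exists>t1 t2. t1 \<noteq> t2 \<and> (s, t1) \<in> G \<and> (s, t2) \<in> G \<and>
       (t1, x) \<in> G\<^sup>* \<and> (t2, y) \<in> G\<^sup>*)"

definition co :: "'n set \<Rightarrow> 'n set \<Rightarrow> ('n \<times> 'n) set \<Rightarrow> 'n \<Rightarrow> 'n \<Rightarrow> bool" where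
  "co Cs Es G x y \<longleftrightarrow> x \<in> Cs \<union> Es \<and> y \<in> Cs \<union> Es \<and>
     \<not> lt G x y \<and> \<not> lt G y x \<and> \<not> conflict Cs G x y"

definition occ_net :: "'n set \<Rightarrow> 'n set \<Rightarrow> ('n \<times> 'n) set \<Rightarrow> bool" where
  "occ_net Cs Es G \<longleftrightarrow> Cs \<inter> Es = {} \<and> G \<subseteq> (Cs \<times> Es) \<union> (Es \<times> Cs) \<and>
     (\<forall>c\<in>Cs. \<forall>e1 e2. (e1, c) \<in> G \<and> (e2, c) \<in> G \<longrightarrow> e1 = e2) \<and>
     (\<forall>x. \<not> lt G x x) \<and>
     (\<forall>x\<in>Cs \<union> Es. finite {y. lt G y x}) \<and>
     (\<forall>x\<in>Cs \<union> Es. \<not> conflict Cs G x x)"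

definition Min_conds :: "'n set \<Rightarrow> ('n \<times> 'n) set \<Rightarrow> 'n set" where
  "Min_conds Cs G = {c\<in>Cs. pre G c = {}}"

definition config :: "'n set \<Rightarrow> 'n set \<Rightarrow> ('n \<times> 'n) set \<Rightarrow> 'n set \<Rightarrow> bool" where
  "config Cs Es G X \<longleftrightarrow> X \<subseteq> Es \<and> (\<forall>e\<in>X. \<forall>e'\<in>Es. lt G e' e \<longrightarrow> e' \<in> X) \<and>
     (\<forall>e\<in>X. \<forall>e'\<in>X. \<not> conflict Cs G e e')"

definition lconf :: "'n set \<Rightarrow> ('n \<times> 'n) set \<Rightarrow> 'n \<Rightarrow> 'n set" where
  "lconf Es G e = {x\<in>Es. lt G x e \<or> x = e}"

definition Cut :: "'n set \<Rightarrow> ('n \<times> 'n) set \<Rightarrow> 'n set \<Rightarrow> 'n set" where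
  "Cut Cs G X = (Min_conds Cs G \<union> post_set G X) - pre_set G X"

definition Mark :: "'n set \<Rightarrow> ('n \<times> 'n) set \<Rightarrow> ('n \<Rightarrow> 'a) \<Rightarrow> 'n set \<Rightarrow> 'a set" where
  "Mark Cs G h X = h ` Cut Cs G X"

definition branching_process ::
  "'a set \<Rightarrow> 'a set \<Rightarrow> ('a \<times> 'a) set \<Rightarrow> ('a \<Rightarrow> nat) \<Rightarrow>
   'n set \<Rightarrow> 'n set \<Rightarrow> ('n \<times> 'n) set \<Rightarrow> ('n \<Rightarrow> 'a) \<Rightarrow> bool" where
  "branching_process P T F M0 Cs Es G h \<longleftrightarrow> occ_net Cs Es G \<and>
     h ` Cs \<subseteq> P \<and> h ` Es \<subseteq> T \<and>
     (\<forall>e\<in>Es. bij_betw h (pre G e) (pre F (h e)) \<and> bij_betw h (post G e) (post F (h e))) \<and>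
     bij_betw h (Min_conds Cs G) {p\<in>P. M0 p \<ge> 1} \<and>
     (\<forall>e1\<in>Es. \<forall>e2\<in>Es. pre G e1 = pre G e2 \<and> h e1 = h e2 \<longrightarrow> e1 = e2)"

text \<open>The unfolding (up to isomorphism): the branching process closed under all
  possible extensions.\<close>
definition is_unfolding ::
  "'a set \<Rightarrow> 'a set \<Rightarrow> ('a \<times> 'a) set \<Rightarrow> ('a \<Rightarrow> nat) \<Rightarrow>
   'n set \<Rightarrow> 'n set \<Rightarrow> ('n \<times> 'n) set \<Rightarrow> ('n \<Rightarrow> 'a) \<Rightarrow> bool" where
  "is_unfolding P T F M0 Cs Es G h \<longleftrightarrow> branching_process P T F M0 Cs Es G h \<and>
     (\<forall>t\<in>T. \<forall>B\<subseteq>Cs. (\<forall>x\<in>B. \<forall>y\<in>B. x \<noteq> y \<longrightarrow> co Cs Es G x y) \<and>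
        bij_betw h B (pre F t) \<longrightarrow> (\<exists>e\<in>Es. pre G e = B \<and> h e = t))"

definition ext_events :: "'n set \<Rightarrow> 'n set \<Rightarrow> ('n \<times> 'n) set \<Rightarrow> 'n set \<Rightarrow> 'n set" where
  "ext_events Cs Es G X = {e\<in>Es. e \<notin> X \<and> config Cs Es G (X \<union> lconf Es G e)}"

definition up_nodes :: "'n set \<Rightarrow> 'n set \<Rightarrow> ('n \<times> 'n) set \<Rightarrow> 'n set \<Rightarrow> 'n set" where
  "up_nodes Cs Es G X = Cut Cs G X \<union> ext_events Cs Es G X \<union> post_set G (ext_events Cs Es G X)"

definition adequate_order ::
  "'n set \<Rightarrow> 'n set \<Rightarrow> ('n \<times> 'n) set \<Rightarrow> ('n \<Rightarrow> 'a) \<Rightarrow> ('n set \<Rightarrow> 'n set \<Rightarrow> bool) \<Rightarrow> bool" where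
  "adequate_order Cs Es G h prec \<longleftrightarrow>
     (let FC = {X. config Cs Es G X \<and> finite X} in
       (\<forall>X\<in>FC. \<not> prec X X) \<and>
       (\<forall>X\<in>FC. \<forall>Y\<in>FC. \<forall>Z\<in>FC. prec X Y \<and> prec Y Z \<longrightarrow> prec X Z) \<and>
       wf {(X, Y). X \<in> FC \<and> Y \<in> FC \<and> prec X Y} \<and>
       (\<forall>X\<in>FC. \<forall>Y\<in>FC. X \<subset> Y \<longrightarrow> prec X Y) \<and>
       (\<forall>X1\<in>FC. \<forall>X2\<in>FC. prec X1 X2 \<and> Mark Cs G h X1 = Mark Cs G h X2 \<longrightarrow>
          (\<forall>I. bij_betw I (up_nodes Cs Es G X1) (up_nodes Cs Es G X2) \<and>
               (\<forall>x\<in>up_nodes Cs Es G X1. h (I x) = h x) \<and>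
               (\<forall>x\<in>up_nodes Cs Es G X1. \<forall>y\<in>up_nodes Cs Es G X1.
                   (x, y) \<in> G \<longleftrightarrow> (I x, I y) \<in> G) \<longrightarrow>
             (\<forall>Ex. finite Ex \<and> Ex \<inter> X1 = {} \<and> config Cs Es G (X1 \<union> Ex) \<longrightarrow>
                prec (X1 \<union> Ex) (X2 \<union> I ` Ex)))))"

definition corresponding ::
  "'n set \<Rightarrow> 'n set \<Rightarrow> ('n \<times> 'n) set \<Rightarrow> ('n \<Rightarrow> 'a) \<Rightarrow> ('n set \<Rightarrow> 'n set \<Rightarrow> bool) \<Rightarrow> 'n \<Rightarrow> 'n \<Rightarrow> bool" where
  "corresponding Cs Es G h prec e e' \<longleftrightarrow> e \<in> Es \<and> e' \<in> Es \<and>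
     Mark Cs G h (lconf Es G e) = Mark Cs G h (lconf Es G e') \<and> prec (lconf Es G e') (lconf Es G e)"

definition cutoff ::
  "'n set \<Rightarrow> 'n set \<Rightarrow> ('n \<times> 'n) set \<Rightarrow> ('n \<Rightarrow> 'a) \<Rightarrow> ('n set \<Rightarrow> 'n set \<Rightarrow> bool) \<Rightarrow> 'n \<Rightarrow> bool" where
  "cutoff Cs Es G h prec e \<longleftrightarrow> (\<exists>e'. corresponding Cs Es G h prec e e')"

text \<open>Nodes of the complete prefix: the greatest backward closed subnet of the
  unfolding containing no events after a cut-off event.\<close>
definition prefix_nodes ::
  "'n set \<Rightarrow> 'n set \<Rightarrow> ('n \<times> 'n) set \<Rightarrow> ('n \<Rightarrow> 'a) \<Rightarrow> ('n set \<Rightarrow> 'n set \<Rightarrow> bool) \<Rightarrow> 'n set" where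
  "prefix_nodes Cs Es G h prec = \<Union>{X. X \<subseteq> Cs \<union> Es \<and>
      (\<forall>x\<in>X. \<forall>y. (y, x) \<in> G \<longrightarrow> y \<in> X) \<and>
      (\<forall>e\<in>X \<inter> Es. \<forall>e'. lt G e' e \<longrightarrow> \<not> cutoff Cs Es G h prec e')}"

definition Max_ev :: "('n \<times> 'n) set \<Rightarrow> 'n set \<Rightarrow> 'n set" where
  "Max_ev G E0 = {e\<in>E0. \<forall>e'\<in>E0. \<not> lt G e e'}"

definition max_adj :: "('n \<times> 'n) set \<Rightarrow> 'n \<Rightarrow> 'n \<Rightarrow> bool" where
  "max_adj G e f \<longleftrightarrow> lt G e f \<and> e \<in> Max_ev G (pre_set G (pre G f))"

text \<open>Here Cp, Ep, Gp are the conditions, events and arcs of the complete prefix;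
  cut-off events and corresponding events are those of the unfolding (Cs,Es,G).\<close>

definition early_confirm ::
  "'n set \<Rightarrow> 'n set \<Rightarrow> ('n \<times> 'n) set \<Rightarrow> ('n \<Rightarrow> 'a) \<Rightarrow> ('n set \<Rightarrow> 'n set \<Rightarrow> bool) \<Rightarrow>
   'n set \<Rightarrow> ('n \<times> 'n) set \<Rightarrow> 'a \<Rightarrow> 'a \<Rightarrow> bool" where
  "early_confirm Cs Es G h prec Ep Gp t1 t2 \<longleftrightarrow>
     (\<exists>e1\<in>Ep. h e1 = t1 \<and>
        ((\<not> cutoff Cs Es G h prec e1 \<and> (\<exists>e2\<in>Ep. h e2 = t2 \<and> max_adj Gp e1 e2)) \<or>
         (cutoff Cs Es G h prec e1 \<and>
           (\<exists>e1'\<in>Ep. corresponding Cs Es G h prec e1 e1' \<and> \<not> cutoff Cs Es G h prec e1' \<and>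
              h ` post Gp e1' = h ` post Gp e1 \<and>
              (\<exists>e2\<in>Ep. h e2 = t2 \<and> max_adj Gp e1' e2)))))"

definition pairwise_co :: "'n set \<Rightarrow> 'n set \<Rightarrow> ('n \<times> 'n) set \<Rightarrow> 'n set \<Rightarrow> bool" where
  "pairwise_co Cp Ep Gp X \<longleftrightarrow> (\<forall>x\<in>X. \<forall>y\<in>X. x \<noteq> y \<longrightarrow> co Cp Ep Gp x y)"

definition check_by_cuts ::
  "('a \<times> 'a) set \<Rightarrow> ('n \<Rightarrow> 'a) \<Rightarrow> 'n set \<Rightarrow> 'n set \<Rightarrow> ('n \<times> 'n) set \<Rightarrow> 'a \<Rightarrow> 'a \<Rightarrow> bool" where
  "check_by_cuts F h Cp Ep Gp t1 t2 \<longleftrightarrow>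
     (\<exists>e1\<in>Ep. h e1 = t1 \<and>
        (let Bprec = post Gp e1 \<union> {c\<in>Cp. co Cp Ep Gp c e1 \<and> h c \<in> pre F t2} in
          (\<exists>X'\<subseteq>Bprec. pairwise_co Cp Ep Gp X' \<and>
             (\<forall>Y. X' \<subset> Y \<and> Y \<subseteq> Bprec \<longrightarrow> \<not> pairwise_co Cp Ep Gp Y) \<and>
             pre F t2 \<subseteq> h ` X')))"

definition improved ::
  "'a set \<Rightarrow> ('a \<times> 'a) set \<Rightarrow>
   'n set \<Rightarrow> 'n set \<Rightarrow> ('n \<times> 'n) set \<Rightarrow> ('n \<Rightarrow> 'a) \<Rightarrow> ('n set \<Rightarrow> 'n set \<Rightarrow> bool) \<Rightarrow> ('a \<times> 'a) set" where
  "improved T F Cs Es G h prec =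
     (let X = prefix_nodes Cs Es G h prec; Cp = Cs \<inter> X; Ep = Es \<inter> X; Gp = G \<inter> (X \<times> X) in
       {(t1, t2). t1 \<in> T \<and> t2 \<in> post_set F (post F t1) \<and>
          (early_confirm Cs Es G h prec Ep Gp t1 t2 \<or> check_by_cuts F h Cp Ep Gp t1 t2)}
       \<union> {(h e1, h e2) | e1 e2. e1 \<in> Ep \<and> e2 \<in> Ep \<and> e1 \<noteq> e2 \<and> co Cp Ep Gp e1 e2}
       \<union> {(h e2, h e1) | e1 e2. e1 \<in> Ep \<and> e2 \<in> Ep \<and> e1 \<noteq> e2 \<and> co Cp Ep Gp e1 e2})"

end

theory Submission
  imports Defs
begin

(*
  A pair returned by IMPROVED is adjacent because each clause exhibits a finite configuration of
  the unfolding in which an occurrence e1 of t1 is maximal and whose cut marks the preset of t2: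
  firing its events with e1 last reaches a marking enabling t1 and, afterwards, t2.  For concurrent
  events and for CheckByCuts this configuration consists of the events below e1 and below a set of
  pairwise concurrent conditions carrying the preset of t2; for e1 |> e2 it is [e2] - {e2}.  For a
  cut-off event e1, the configuration [e2] - {e2} above the corresponding event e1' is transported,
  through the isomorphism of the futures of [e1'] and [e1], to a configuration above [e1]; there e1
  stays maximal because e1 and e1' produce the same places.

  Conversely, every reachable marking is the image of the cut of a finite configuration, and by the
  adequate order of one without cut-off events, which therefore lies in the complete prefix.  If it
  enables t1 and then t2, an occurrence e1 of t1 extends this configuration.  If t2 may consume a
  place produced by t1, the postconditions of e1 and the conditions of the new cut carrying the
  preset of t2 are pairwise concurrent and extend to a maximal such set, so CheckByCuts succeeds;
  otherwise t2 is already enabled before e1 by an event concurrent to e1.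
*)

lemma rtrancl_neq_trancl: "(x, z) \<in> r\<^sup>* \<Longrightarrow> x \<noteq> z \<Longrightarrow> (x, z) \<in> r\<^sup>+"
  by (simp add: rtrancl_eq_or_trancl)

lemma mem_post: "y \<in> post F x \<longleftrightarrow> (x, y) \<in> F"
  by (simp add: post_def)

lemma rel_set_insert: "rel_set R A B \<Longrightarrow> R a b \<Longrightarrow> rel_set R (insert a A) (insert b B)"
  by (auto simp: rel_set_def)

lemma rel_set_image_eq:
  assumes "rel_set R A B" and "\<And>x y. R x y \<Longrightarrow> f x = f y"
  shows "f ` A = f ` B"
proof (intro subset_antisym subsetI)
  fix y assume "y \<in> f ` A"
  then obtain a where "a \<in> A" "y = f a" by blast
  then obtain b where "b \<in> B" "R a b" using rel_setD1[OF assms(1)] by blast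
  then show "y \<in> f ` B" using assms(2) \<open>y = f a\<close> by blast
next
  fix y assume "y \<in> f ` B"
  then obtain b where "b \<in> B" "y = f b" by blast
  then obtain a where "a \<in> A" "R a b" using rel_setD2[OF assms(1)] by blast
  then show "y \<in> f ` A" using assms(2) \<open>y = f b\<close> by (metis imageI)
qed

lemma rel_set_unique_eq:
  assumes "rel_set R A B" "rel_set R A B'" and unique: "\<And>a b b'. a \<in> A \<Longrightarrow> R a b \<Longrightarrow> R a b' \<Longrightarrow> b = b'"
  shows "B = B'"
proof (intro subset_antisym subsetI)
  fix b assume "b \<in> B"
  then obtain a where a: "a \<in> A" "R a b" using rel_setD2[OF assms(1)] by blast
  then obtain b' where "b' \<in> B'" "R a b'" using rel_setD1[OF assms(2)] by blast
  then show "b \<in> B'" using unique[OF a] by blast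
next
  fix b' assume "b' \<in> B'"
  then obtain a where a: "a \<in> A" "R a b'" using rel_setD2[OF assms(2)] by blast
  then obtain b where "b \<in> B" "R a b" using rel_setD1[OF assms(1)] by blast
  then show "b' \<in> B" using unique[OF a(1)] a(2) by blast
qed

lemma maximal_pairwise_superset:
  assumes "X0 \<subseteq> B" "pairwise R X0"
  obtains X where "X0 \<subseteq> X" "X \<subseteq> B" "pairwise R X" "\<And>Y. X \<subset> Y \<Longrightarrow> Y \<subseteq> B \<Longrightarrow> \<not> pairwise R Y"
proof -
  let ?A = "{Y. X0 \<subseteq> Y \<and> Y \<subseteq> B \<and> pairwise R Y}"
  have "\<Union>\<C> \<in> ?A" if ne: "\<C> \<noteq> {}" and chain: "subset.chain ?A \<C>" for \<C>
  proof -
    have sub: "\<C> \<subseteq> ?A" using chain by (simp add: subset_chain_def)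
    have "pairwise R (\<Union>\<C>)"
      using pairwise_chain_Union[of \<C> R] sub chain by (auto simp: subset_chain_def chain_subset_def)
    moreover have "X0 \<subseteq> \<Union>\<C>" using ne sub by blast
    moreover have "\<Union>\<C> \<subseteq> B" using sub by blast
    ultimately show ?thesis by simp
  qed
  moreover have "?A \<noteq> {}" using assms by blast
  ultimately obtain M where M: "M \<in> ?A" and maximal: "\<forall>X\<in>?A. M \<subseteq> X \<longrightarrow> X = M"
    using subset_Zorn_nonempty[of ?A] by meson
  have "\<not> pairwise R Y" if "M \<subset> Y" "Y \<subseteq> B" for Y
  proof
    assume "pairwise R Y"
    then have "Y \<in> ?A" using that M by auto
    then show False using maximal that(1) by blast
  qed
  then show thesis using that M by blast
qed

section \<open>Occurrence nets\<close>

locale occurrence_net =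
  fixes Cs Es :: "'n set" and G :: "('n \<times> 'n) set"
  assumes occ_net: "occ_net Cs Es G"
    and pre_event_nonempty: "e \<in> Es \<Longrightarrow> pre G e \<noteq> {}"
begin

abbreviation "cfg X \<equiv> config Cs Es G X"

lemma conds_events_disjoint: "Cs \<inter> Es = {}"
  using occ_net by (simp add: occ_net_def)

lemma arc_cases: "(x, y) \<in> G \<Longrightarrow> (x \<in> Cs \<and> y \<in> Es) \<or> (x \<in> Es \<and> y \<in> Cs)"
  using occ_net by (auto simp: occ_net_def)

lemma arc_from_cond: "(x, y) \<in> G \<Longrightarrow> x \<in> Cs \<Longrightarrow> y \<in> Es"
  and arc_from_event: "(x, y) \<in> G \<Longrightarrow> x \<in> Es \<Longrightarrow> y \<in> Cs"
  and arc_to_cond: "(x, y) \<in> G \<Longrightarrow> y \<in> Cs \<Longrightarrow> x \<in> Es"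
  and arc_to_event: "(x, y) \<in> G \<Longrightarrow> y \<in> Es \<Longrightarrow> x \<in> Cs"
  using arc_cases conds_events_disjoint by blast+

lemma cond_pre_unique: "(e1, c) \<in> G \<Longrightarrow> (e2, c) \<in> G \<Longrightarrow> c \<in> Cs \<Longrightarrow> e1 = e2"
  using occ_net unfolding occ_net_def by blast

lemma trancl_irrefl: "(x, x) \<notin> G\<^sup>+"
  using occ_net by (simp add: occ_net_def lt_def)

lemma finite_past: "x \<in> Cs \<union> Es \<Longrightarrow> finite {y. (y, x) \<in> G\<^sup>+}"
  using occ_net by (simp add: occ_net_def lt_def)

lemma no_self_conflict: "x \<in> Cs \<union> Es \<Longrightarrow> \<not> conflict Cs G x x"
  using occ_net by (simp add: occ_net_def)

lemma pre_subset_conds: "e \<in> Es \<Longrightarrow> pre G e \<subseteq> Cs"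
  using arc_to_event by (auto simp: pre_def)

lemma post_subset_conds: "e \<in> Es \<Longrightarrow> post G e \<subseteq> Cs"
  using arc_from_event by (auto simp: post_def)

lemma event_cond_trancl: "(x, z) \<in> G\<^sup>* \<Longrightarrow> x \<in> Es \<Longrightarrow> z \<in> Cs \<Longrightarrow> (x, z) \<in> G\<^sup>+"
  using rtrancl_neq_trancl[of x z G] conds_events_disjoint by blast

lemma trancl_into_cond: "(x, c) \<in> G\<^sup>+ \<Longrightarrow> (g, c) \<in> G \<Longrightarrow> c \<in> Cs \<Longrightarrow> (x, g) \<in> G\<^sup>*"
  using tranclD2 cond_pre_unique by metis

lemma conflictI: "s \<in> Cs \<Longrightarrow> t1 \<noteq> t2 \<Longrightarrow> (s, t1) \<in> G \<Longrightarrow> (s, t2) \<in> G \<Longrightarrow>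
   (t1, x) \<in> G\<^sup>* \<Longrightarrow> (t2, y) \<in> G\<^sup>* \<Longrightarrow> conflict Cs G x y"
  unfolding conflict_def by blast

lemma conflictE:
  assumes "conflict Cs G x y"
  obtains s t1 t2 where "s \<in> Cs" "t1 \<noteq> t2" "(s, t1) \<in> G" "(s, t2) \<in> G"
    "(t1, x) \<in> G\<^sup>*" "(t2, y) \<in> G\<^sup>*" "t1 \<in> Es" "t2 \<in> Es"
  using assms arc_from_cond unfolding conflict_def by blast

lemma conflict_rtrancl_mono:
  "conflict Cs G x y \<Longrightarrow> (x, x') \<in> G\<^sup>* \<Longrightarrow> (y, y') \<in> G\<^sup>* \<Longrightarrow> conflict Cs G x' y'"
  unfolding conflict_def by (meson rtrancl_trans)

lemma conflict_sym: "conflict Cs G x y \<Longrightarrow> conflict Cs G y x"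
  unfolding conflict_def by metis

lemma co_sym: "co Cs Es G x y \<Longrightarrow> co Cs Es G y x"
  using conflict_sym by (auto simp: co_def)

lemma coD: "co Cs Es G x y \<Longrightarrow> (x, y) \<notin> G\<^sup>+ \<and> (y, x) \<notin> G\<^sup>+ \<and> \<not> conflict Cs G x y"
  by (simp add: co_def lt_def)

lemma pre_pairwise_co:
  assumes e: "e \<in> Es" and c: "c \<in> pre G e" and d: "d \<in> pre G e"
  shows "co Cs Es G c d"
proof -
  have ce: "(c, e) \<in> G" and de: "(d, e) \<in> G" using c d by (auto simp: pre_def)
  have cC: "c \<in> Cs" and dC: "d \<in> Cs" using arc_to_event ce de e by auto
  have not_before: "(x, y) \<notin> G\<^sup>+" if "(x, e) \<in> G" "(y, e) \<in> G" "x \<in> Cs" for x y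
  proof
    assume "(x, y) \<in> G\<^sup>+"
    then obtain f where xf: "(x, f) \<in> G" and fy: "(f, y) \<in> G\<^sup>*" by (blast dest: tranclD)
    show False
    proof (cases "f = e")
      case True
      then have "(e, e) \<in> G\<^sup>+" using rtrancl_into_trancl1[OF fy that(2)] by simp
      then show False using trancl_irrefl by blast
    next
      case False
      then have "conflict Cs G y e" using conflictI[OF that(3) False xf that(1) fy] by simp
      then show False
        using conflict_rtrancl_mono[OF _ r_into_rtrancl[OF that(2)] rtrancl_refl]
          no_self_conflict e by blast
    qed
  qed
  have "\<not> conflict Cs G c d"
  proof
    assume "conflict Cs G c d"
    then show False
      using conflict_rtrancl_mono[OF _ r_into_rtrancl[OF ce] r_into_rtrancl[OF de]]
        no_self_conflict e by blast
  qed
  then show ?thesis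
    using not_before[OF ce de cC] not_before[OF de ce dC] cC dC by (simp add: co_def lt_def)
qed

lemma co_pre_of_co:
  assumes e1: "e1 \<in> Es" and e2: "e2 \<in> Es" and ne: "e1 \<noteq> e2"
    and co: "co Cs Es G e1 e2" and c: "c \<in> pre G e2"
  shows "co Cs Es G c e1"
proof -
  have ce2: "(c, e2) \<in> G" using c by (simp add: pre_def)
  have cC: "c \<in> Cs" using arc_to_event[OF ce2 e2] .
  have "(c, e1) \<notin> G\<^sup>+"
  proof
    assume "(c, e1) \<in> G\<^sup>+"
    then obtain t where ct: "(c, t) \<in> G" and te1: "(t, e1) \<in> G\<^sup>*" by (blast dest: tranclD)
    show False
    proof (cases "t = e2")
      case True
      then have "(e2, e1) \<in> G\<^sup>+" using rtrancl_neq_trancl[OF te1] ne by blast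
      then show False using coD[OF co] by blast
    next
      case False
      then have "conflict Cs G e1 e2" using conflictI[OF cC False ct ce2 te1] by blast
      then show False using coD[OF co] by blast
    qed
  qed
  moreover have "(e1, c) \<notin> G\<^sup>+" using coD[OF co] ce2 by (meson trancl_into_trancl)
  moreover have "\<not> conflict Cs G c e1"
    using coD[OF co] conflict_rtrancl_mono[OF _ r_into_rtrancl[OF ce2] rtrancl_refl]
      conflict_sym by blast
  ultimately show ?thesis using cC e1 by (simp add: co_def lt_def)
qed

end

context occurrence_net begin

lemma config_subset_events: "cfg K \<Longrightarrow> K \<subseteq> Es"
  by (simp add: config_def)

lemma config_downward: "cfg K \<Longrightarrow> f \<in> K \<Longrightarrow> e \<in> Es \<Longrightarrow> (e, f) \<in> G\<^sup>+ \<Longrightarrow> e \<in> K"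
  by (simp add: config_def lt_def)

lemma config_downward_rtrancl: "cfg K \<Longrightarrow> f \<in> K \<Longrightarrow> e \<in> Es \<Longrightarrow> (e, f) \<in> G\<^sup>* \<Longrightarrow> e \<in> K"
  using config_downward rtrancl_neq_trancl[of e f G] by blast

lemma config_conflict_free: "cfg K \<Longrightarrow> e \<in> K \<Longrightarrow> f \<in> K \<Longrightarrow> \<not> conflict Cs G e f"
  by (simp add: config_def)

lemma Cut_subset_conds: "cfg K \<Longrightarrow> Cut Cs G K \<subseteq> Cs"
  using post_subset_conds config_subset_events
  by (fastforce simp: Cut_def post_set_def Min_conds_def)

lemma Cut_empty: "Cut Cs G {} = Min_conds Cs G"
  by (simp add: Cut_def post_set_def pre_set_def)

lemma Cut_not_consumed: "c \<in> Cut Cs G K \<Longrightarrow> f \<in> K \<Longrightarrow> (c, f) \<notin> G"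
  by (auto simp: Cut_def pre_set_def pre_def)

lemma Cut_past_in_config:
  assumes K: "cfg K" and c: "c \<in> Cut Cs G K" and xc: "(x, c) \<in> G\<^sup>+" and x: "x \<in> Es"
  shows "x \<in> K"
proof -
  obtain g where xg: "(x, g) \<in> G\<^sup>*" and gc: "(g, c) \<in> G" using xc by (blast dest: tranclD2)
  have cC: "c \<in> Cs" using Cut_subset_conds K c by blast
  have "c \<notin> Min_conds Cs G" using gc by (auto simp: Min_conds_def pre_def)
  then obtain g' where "g' \<in> K" "(g', c) \<in> G"
    using c by (auto simp: Cut_def post_set_def post_def)
  with gc cC have "g \<in> K" using cond_pre_unique by blast
  then show ?thesis using config_downward_rtrancl[OF K _ x xg] by blast
qed

lemma Cut_pairwise_co:
  assumes K: "cfg K" and c: "c \<in> Cut Cs G K" and d: "d \<in> Cut Cs G K"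
  shows "co Cs Es G c d"
proof -
  have not_before: "(x, y) \<notin> G\<^sup>+" if x: "x \<in> Cut Cs G K" and y: "y \<in> Cut Cs G K" for x y
  proof
    assume "(x, y) \<in> G\<^sup>+"
    then obtain f where xf: "(x, f) \<in> G" and fy: "(f, y) \<in> G\<^sup>*" by (blast dest: tranclD)
    have fE: "f \<in> Es" using arc_from_cond xf Cut_subset_conds K x by blast
    have "f \<in> K"
      using Cut_past_in_config[OF K y event_cond_trancl[OF fy fE] fE] Cut_subset_conds K y
      by blast
    then show False using Cut_not_consumed[OF x] xf by blast
  qed
  have "\<not> conflict Cs G c d"
  proof
    assume "conflict Cs G c d"
    then obtain s t1 t2 where st: "s \<in> Cs" "t1 \<noteq> t2" "(s, t1) \<in> G" "(s, t2) \<in> G"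
      and t1c: "(t1, c) \<in> G\<^sup>*" and t2d: "(t2, d) \<in> G\<^sup>*" and t1: "t1 \<in> Es" and t2: "t2 \<in> Es"
      by (rule conflictE)
    have cC: "c \<in> Cs" and dC: "d \<in> Cs" using Cut_subset_conds K c d by auto
    have "t1 \<in> K" using Cut_past_in_config[OF K c event_cond_trancl[OF t1c t1 cC] t1] .
    moreover have "t2 \<in> K" using Cut_past_in_config[OF K d event_cond_trancl[OF t2d t2 dC] t2] .
    ultimately show False using config_conflict_free[OF K] conflictI[OF st] by blast
  qed
  then show ?thesis
    using not_before[OF c d] not_before[OF d c] Cut_subset_conds K c d by (auto simp: co_def lt_def)
qed

lemma lconf_rtrancl: "x \<in> lconf Es G e \<Longrightarrow> (x, e) \<in> G\<^sup>*"
  by (auto simp: lconf_def lt_def)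

lemma lconf_self: "e \<in> Es \<Longrightarrow> e \<in> lconf Es G e"
  by (simp add: lconf_def)

lemma finite_lconf: "e \<in> Es \<Longrightarrow> finite (lconf Es G e)"
proof -
  assume "e \<in> Es"
  moreover have "lconf Es G e \<subseteq> insert e {y. (y, e) \<in> G\<^sup>+}" by (auto simp: lconf_def lt_def)
  ultimately show ?thesis using finite_past[of e] finite_subset by auto
qed

lemma config_lconf: "e \<in> Es \<Longrightarrow> cfg (lconf Es G e)"
  unfolding config_def
proof (intro conjI ballI impI)
  fix x y assume e: "e \<in> Es" and "x \<in> lconf Es G e" "y \<in> lconf Es G e"
  then have "(x, e) \<in> G\<^sup>*" "(y, e) \<in> G\<^sup>*" by (auto dest: lconf_rtrancl)
  then show "\<not> conflict Cs G x y" using no_self_conflict[of e] e conflict_rtrancl_mono by blast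
qed (auto simp: lconf_def lt_def intro: trancl_trans)

lemma lconf_maximal: "e \<in> Es \<Longrightarrow> f \<in> lconf Es G e \<Longrightarrow> (e, f) \<notin> G\<^sup>+"
  using trancl_irrefl by (auto simp: lconf_def lt_def dest: trancl_trans)

lemma lconf_subset_config: "cfg K \<Longrightarrow> f \<in> K \<Longrightarrow> lconf Es G f \<subseteq> K"
  using config_downward by (auto simp: lconf_def lt_def)

lemma finite_has_maximal:
  assumes "finite K" "K \<noteq> {}" shows "\<exists>e\<in>K. \<forall>f\<in>K. (e, f) \<notin> G\<^sup>+"
  using assms
proof (induction K rule: finite_ne_induct)
  case (singleton x) then show ?case using trancl_irrefl by auto
next
  case (insert x K)
  then obtain m where m: "m \<in> K" "\<forall>f\<in>K. (m, f) \<notin> G\<^sup>+" by blast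
  show ?case
  proof (cases "(m, x) \<in> G\<^sup>+")
    case True
    then have "\<forall>f\<in>insert x K. (x, f) \<notin> G\<^sup>+" using m trancl_irrefl by (auto dest: trancl_trans)
    then show ?thesis by blast
  qed (use m in auto)
qed

context
  fixes K e
  assumes K: "cfg K" and e: "e \<in> K" and maximal: "\<forall>f\<in>K. (e, f) \<notin> G\<^sup>+"
begin

lemma config_remove_maximal: "cfg (K - {e})"
  unfolding config_def
proof (intro conjI ballI impI)
  fix x e' assume x: "x \<in> K - {e}" and "e' \<in> Es" and "lt G e' x"
  then show "e' \<in> K - {e}" using config_downward[OF K] maximal by (auto simp: lt_def)
qed (use config_subset_events[OF K] config_conflict_free[OF K] in auto)

lemma pre_maximal_subset_Cut: "pre G e \<subseteq> Cut Cs G (K - {e})"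
proof
  fix c assume c: "c \<in> pre G e"
  have eE: "e \<in> Es" using K e config_subset_events by auto
  have cC: "c \<in> Cs" using pre_subset_conds[OF eE] c by auto
  have ce: "(c, e) \<in> G" using c by (simp add: pre_def)
  have "c \<in> Min_conds Cs G \<union> post_set G (K - {e})"
  proof (cases "pre G c = {}")
    case True then show ?thesis using cC by (simp add: Min_conds_def)
  next
    case False
    then obtain g where g: "(g, c) \<in> G" by (auto simp: pre_def)
    have "(g, e) \<in> G\<^sup>+" using g ce by auto
    then have "g \<in> K" "g \<noteq> e"
      using config_downward[OF K e arc_to_cond[OF g cC]] trancl_irrefl by auto
    then show ?thesis using g by (auto simp: post_set_def post_def)
  qed
  moreover have "c \<notin> pre_set G (K - {e})"
  proof
    assume "c \<in> pre_set G (K - {e})"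
    then obtain f where f: "f \<in> K" "f \<noteq> e" "(c, f) \<in> G" by (auto simp: pre_set_def pre_def)
    then have "conflict Cs G e f" using conflictI[OF cC _ ce f(3)] by blast
    then show False using config_conflict_free[OF K e f(1)] by simp
  qed
  ultimately show "c \<in> Cut Cs G (K - {e})" by (simp add: Cut_def)
qed

lemma Cut_remove_maximal: "Cut Cs G K = (Cut Cs G (K - {e}) - pre G e) \<union> post G e"
proof -
  have post_set: "post_set G K = post_set G (K - {e}) \<union> post G e"
    and pre_set: "pre_set G K = pre_set G (K - {e}) \<union> pre G e"
    using e by (auto simp: post_set_def pre_set_def)
  have "post G e \<inter> pre_set G (K - {e}) = {}"
    using maximal by (auto simp: pre_set_def post_def pre_def) (meson r_into_trancl trancl_into_trancl)
  moreover have "post G e \<inter> pre G e = {}"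
    using trancl_irrefl by (auto simp: post_def pre_def) (meson trancl.simps trancl_into_trancl)
  moreover have "post G e \<inter> Min_conds Cs G = {}"
    by (auto simp: post_def Min_conds_def pre_def)
  ultimately show ?thesis unfolding Cut_def post_set pre_set by blast
qed

end

context
  fixes C e
  assumes C: "cfg C" and e: "e \<in> Es" and enabled: "pre G e \<subseteq> Cut Cs G C"
begin

lemma enabled_past_in_config: "(f, e) \<in> G\<^sup>+ \<Longrightarrow> f \<in> Es \<Longrightarrow> f \<in> C"
proof -
  assume fe: "(f, e) \<in> G\<^sup>+" and f: "f \<in> Es"
  obtain c where fc: "(f, c) \<in> G\<^sup>*" and ce: "(c, e) \<in> G" using fe by (blast dest: tranclD2)
  have cC: "c \<in> Cs" using arc_to_event[OF ce e] .
  have "c \<in> Cut Cs G C" using enabled ce by (auto simp: pre_def)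
  then show ?thesis using Cut_past_in_config[OF C _ event_cond_trancl[OF fc f cC] f] by blast
qed

lemma enabled_not_in_config: "e \<notin> C"
proof
  assume "e \<in> C"
  obtain c where "c \<in> pre G e" using pre_event_nonempty[OF e] by blast
  then show False using Cut_not_consumed[of c C e] enabled \<open>e \<in> C\<close> by (auto simp: pre_def)
qed

lemma config_insert_enabled: "cfg (insert e C)"
  unfolding config_def
proof (intro conjI ballI impI)
  fix x e' assume "x \<in> insert e C" "e' \<in> Es" "lt G e' x"
  then show "e' \<in> insert e C"
    using enabled_past_in_config config_downward[OF C] by (auto simp: lt_def)
next
  have new: "\<not> conflict Cs G e f" if f: "f \<in> C" for f
  proof
    assume "conflict Cs G e f"
    then obtain s t1 t2 where st: "s \<in> Cs" "t1 \<noteq> t2" "(s, t1) \<in> G" "(s, t2) \<in> G"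
      and t1e: "(t1, e) \<in> G\<^sup>*" and t2f: "(t2, f) \<in> G\<^sup>*" and t1: "t1 \<in> Es" and t2: "t2 \<in> Es"
      by (rule conflictE)
    have t2C: "t2 \<in> C" using config_downward_rtrancl[OF C f t2 t2f] .
    show False
    proof (cases "t1 = e")
      case True
      then have "s \<in> Cut Cs G C" using enabled st(3) by (auto simp: pre_def)
      then show False using Cut_not_consumed t2C st(4) by blast
    next
      case False
      then have "t1 \<in> C" using enabled_past_in_config[OF _ t1] rtrancl_neq_trancl[OF t1e] by blast
      then show False using config_conflict_free[OF C _ t2C] conflictI[OF st] by blast
    qed
  qed
  fix x y assume "x \<in> insert e C" "y \<in> insert e C"
  then show "\<not> conflict Cs G x y"
    using new config_conflict_free[OF C] no_self_conflict[of e] e conflict_sym by blast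
qed (use config_subset_events[OF C] e in auto)

lemma enabled_maximal: "\<forall>f\<in>insert e C. (e, f) \<notin> G\<^sup>+"
  using config_downward[OF C _ e] enabled_not_in_config trancl_irrefl by blast

lemma Cut_insert_enabled: "Cut Cs G (insert e C) = (Cut Cs G C - pre G e) \<union> post G e"
  using Cut_remove_maximal[OF config_insert_enabled _ enabled_maximal] enabled_not_in_config
  by simp

end

end

context occurrence_net begin

lemma config_extension_induct:
  assumes K: "finite K" and L: "cfg L" "L \<subseteq> K" and KL: "cfg K"
    and base: "Q L"
    and step: "\<And>C e. cfg C \<Longrightarrow> L \<subseteq> C \<Longrightarrow> insert e C \<subseteq> K \<Longrightarrow> e \<in> Es \<Longrightarrow>
       pre G e \<subseteq> Cut Cs G C \<Longrightarrow> Q C \<Longrightarrow> Q (insert e C)"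
  shows "Q K"
proof -
  have "Q K'" if "K' \<subseteq> K" "cfg K'" "L \<subseteq> K'" for K'
    using that
  proof (induction "card (K' - L)" arbitrary: K' rule: less_induct)
    case less
    show ?case
    proof (cases "K' - L = {}")
      case True
      then have "K' = L" using less.prems(3) by blast
      then show ?thesis using base by simp
    next
      case False
      have "finite (K' - L)" using K less.prems(1) finite_subset by blast
      then obtain f where f: "f \<in> K' - L" and max: "\<forall>g\<in>K' - L. (f, g) \<notin> G\<^sup>+"
        using finite_has_maximal False by blast
      have fE: "f \<in> Es" using f config_subset_events[OF less.prems(2)] by blast
      have maximal: "\<forall>g\<in>K'. (f, g) \<notin> G\<^sup>+"
      proof (intro ballI notI)
        fix g assume "g \<in> K'" "(f, g) \<in> G\<^sup>+"
        moreover have "g \<notin> L" using config_downward[OF L(1) _ fE] f \<open>(f, g) \<in> G\<^sup>+\<close> by blast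
        ultimately show False using max by blast
      qed
      have f_in: "f \<in> K'" using f by blast
      note remove = config_remove_maximal[OF less.prems(2) f_in maximal]
        pre_maximal_subset_Cut[OF less.prems(2) f_in maximal]
      have "K' - {f} - L = (K' - L) - {f}" by blast
      then have "card (K' - {f} - L) < card (K' - L)"
        using card_Diff1_less[OF \<open>finite (K' - L)\<close> f] by simp
      moreover have "K' - {f} \<subseteq> K" "L \<subseteq> K' - {f}" using less.prems f by auto
      ultimately have "Q (K' - {f})" using less.hyps[of "K' - {f}"] remove(1) by simp
      moreover have "insert f (K' - {f}) = K'" using f by blast
      ultimately show ?thesis
        using step[OF remove(1) \<open>L \<subseteq> K' - {f}\<close> _ fE remove(2)] less.prems(1) by simp
    qed
  qed
  then show ?thesis using L KL by blast
qed

lemma co_enabled_events: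
  assumes C: "cfg C" and e1: "e1 \<in> Es" and e2: "e2 \<in> Es"
    and p1: "pre G e1 \<subseteq> Cut Cs G C" and p2: "pre G e2 \<subseteq> Cut Cs G C"
    and disjoint: "pre G e1 \<inter> pre G e2 = {}"
  shows "co Cs Es G e1 e2"
proof -
  note past1 = enabled_past_in_config[OF C e1 p1] and past2 = enabled_past_in_config[OF C e2 p2]
  have out1: "e1 \<notin> C" and out2: "e2 \<notin> C"
    using enabled_not_in_config[OF C e1 p1] enabled_not_in_config[OF C e2 p2] .
  have "\<not> conflict Cs G e1 e2"
  proof
    assume "conflict Cs G e1 e2"
    then obtain s t1 t2 where st: "s \<in> Cs" "t1 \<noteq> t2" "(s, t1) \<in> G" "(s, t2) \<in> G"
      and t1e: "(t1, e1) \<in> G\<^sup>*" and t2e: "(t2, e2) \<in> G\<^sup>*" and t1: "t1 \<in> Es" and t2: "t2 \<in> Es"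
      by (rule conflictE)
    have C1: "t1 = e1 \<or> t1 \<in> C" using past1[OF _ t1] rtrancl_neq_trancl[OF t1e] by blast
    have C2: "t2 = e2 \<or> t2 \<in> C" using past2[OF _ t2] rtrancl_neq_trancl[OF t2e] by blast
    show False
    proof (cases "t1 = e1"; cases "t2 = e2")
      assume "t1 = e1" "t2 = e2"
      then show False using st(3,4) disjoint by (auto simp: pre_def)
    next
      assume "t1 = e1" "t2 \<noteq> e2"
      then have "s \<in> Cut Cs G C" "t2 \<in> C" using p1 st(3) C2 by (auto simp: pre_def)
      then show False using Cut_not_consumed st(4) by blast
    next
      assume "t1 \<noteq> e1" "t2 = e2"
      then have "s \<in> Cut Cs G C" "t1 \<in> C" using p2 st(4) C1 by (auto simp: pre_def)
      then show False using Cut_not_consumed st(3) by blast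
    next
      assume "t1 \<noteq> e1" "t2 \<noteq> e2"
      then have "t1 \<in> C" "t2 \<in> C" using C1 C2 by auto
      then show False using config_conflict_free[OF C] conflictI[OF st] by blast
    qed
  qed
  then show ?thesis
    using past1[OF _ e2] past2[OF _ e1] out1 out2 e1 e2 by (auto simp: co_def lt_def)
qed

lemma co_Cut_enabled:
  assumes C: "cfg C" and e: "e \<in> Es" and enabled: "pre G e \<subseteq> Cut Cs G C"
    and c: "c \<in> Cut Cs G C" and not_pre: "c \<notin> pre G e"
  shows "co Cs Es G c e"
proof -
  note past = enabled_past_in_config[OF C e enabled]
  have cC: "c \<in> Cs" using Cut_subset_conds[OF C] c by auto
  have "(c, e) \<notin> G\<^sup>+"
  proof
    assume "(c, e) \<in> G\<^sup>+"
    then obtain f where cf: "(c, f) \<in> G" and fe: "(f, e) \<in> G\<^sup>*" by (blast dest: tranclD)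
    have "f \<noteq> e" using not_pre cf by (auto simp: pre_def)
    then have "f \<in> C" using past[OF _ arc_from_cond[OF cf cC]] rtrancl_neq_trancl[OF fe] by blast
    then show False using Cut_not_consumed[OF c] cf by blast
  qed
  moreover have "(e, c) \<notin> G\<^sup>+"
    using Cut_past_in_config[OF C c _ e] enabled_not_in_config[OF C e enabled] by blast
  moreover have "\<not> conflict Cs G c e"
  proof
    assume "conflict Cs G c e"
    then obtain s t1 t2 where st: "s \<in> Cs" "t1 \<noteq> t2" "(s, t1) \<in> G" "(s, t2) \<in> G"
      and t1c: "(t1, c) \<in> G\<^sup>*" and t2e: "(t2, e) \<in> G\<^sup>*" and t1: "t1 \<in> Es" and t2: "t2 \<in> Es"
      by (rule conflictE)
    have t1C: "t1 \<in> C" using Cut_past_in_config[OF C c event_cond_trancl[OF t1c t1 cC] t1] .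
    show False
    proof (cases "t2 = e")
      case True
      then have "s \<in> Cut Cs G C" using enabled st(4) by (auto simp: pre_def)
      then show False using Cut_not_consumed t1C st(3) by blast
    next
      case False
      then have "t2 \<in> C" using past[OF _ t2] rtrancl_neq_trancl[OF t2e] by blast
      then show False using config_conflict_free[OF C t1C] conflictI[OF st] by blast
    qed
  qed
  ultimately show ?thesis using cC e by (simp add: co_def lt_def)
qed

lemma Cut_insert_enabled_post_or_co:
  assumes C: "cfg C" and e: "e \<in> Es" and enabled: "pre G e \<subseteq> Cut Cs G C"
    and c: "c \<in> Cut Cs G (insert e C)"
  shows "c \<in> post G e \<or> co Cs Es G c e"
  using c co_Cut_enabled[OF C e enabled] unfolding Cut_insert_enabled[OF C e enabled] by blast

lemma ext_events_subset: "ext_events Cs Es G X \<subseteq> Es"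
  by (auto simp: ext_events_def)

lemma ext_eventsI:
  assumes K: "cfg K" and X: "cfg X" "X \<subseteq> K" and f: "f \<in> K" "f \<notin> X"
  shows "f \<in> ext_events Cs Es G X"
proof -
  have sub: "X \<union> lconf Es G f \<subseteq> K" using X lconf_subset_config[OF K f(1)] by blast
  have "cfg (X \<union> lconf Es G f)"
    unfolding config_def
  proof (intro conjI ballI impI)
    fix x e' assume "x \<in> X \<union> lconf Es G f" "e' \<in> Es" "lt G e' x"
    then show "e' \<in> X \<union> lconf Es G f"
      using config_downward[OF X(1)] by (auto simp: lconf_def lt_def intro: trancl_trans)
  next
    show "X \<union> lconf Es G f \<subseteq> Es" using sub config_subset_events[OF K] by blast
  next
    fix x y assume "x \<in> X \<union> lconf Es G f" "y \<in> X \<union> lconf Es G f"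
    then show "\<not> conflict Cs G x y" using sub config_conflict_free[OF K] by blast
  qed
  then show ?thesis using f config_subset_events[OF K] by (auto simp: ext_events_def)
qed

lemma enabled_in_ext_events:
  assumes C: "cfg C" and X: "cfg X" "X \<subseteq> C" and e: "e \<in> Es" and enabled: "pre G e \<subseteq> Cut Cs G C"
  shows "e \<in> ext_events Cs Es G X"
  using ext_eventsI[OF config_insert_enabled[OF C e enabled] X(1)] X(2)
    enabled_not_in_config[OF C e enabled] by blast

lemma Cut_disjoint_post_ext:
  assumes X: "cfg X" and c: "c \<in> Cut Cs G X" and f: "f \<in> ext_events Cs Es G X"
  shows "c \<notin> post G f"
proof
  assume "c \<in> post G f"
  then have fc: "(f, c) \<in> G" by (simp add: post_def)
  have cC: "c \<in> Cs" using Cut_subset_conds X c by auto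
  have "c \<notin> Min_conds Cs G" using fc by (auto simp: Min_conds_def pre_def)
  then obtain g where "g \<in> X" "(g, c) \<in> G" using c by (auto simp: Cut_def post_set_def post_def)
  then have "f \<in> X" using cond_pre_unique[OF fc _ cC] by auto
  then show False using f by (simp add: ext_events_def)
qed

end

section \<open>Reachable markings of a 1-safe net as cuts of its unfolding\<close>

abbreviation marking_of :: "'a set \<Rightarrow> 'a \<Rightarrow> nat" where
  "marking_of S \<equiv> \<lambda>p. if p \<in> S then 1 else 0"

lemma fire_marking_of_safe:
  assumes safe: "one_safe T F M0" and M: "marking_of S \<in> reach T F M0"
    and en: "enabled T F (marking_of S) t"
  shows "(S - pre F t) \<inter> post F t = {}"
    and "fire F (marking_of S) t = marking_of ((S - pre F t) \<union> post F t)"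
proof -
  have pre: "pre F t \<subseteq> S" using en by (auto simp: enabled_def split: if_splits)
  have bound: "fire F (marking_of S) t p \<le> 1" for p
    using safe reach_step[OF M en] by (simp add: one_safe_def)
  show disjoint: "(S - pre F t) \<inter> post F t = {}"
  proof -
    { fix p assume "p \<in> S - pre F t" "p \<in> post F t"
      then have "fire F (marking_of S) t p = 2" by (simp add: fire_def)
      then have False using bound[of p] by simp }
    then show ?thesis by blast
  qed
  show "fire F (marking_of S) t = marking_of ((S - pre F t) \<union> post F t)"
    using pre disjoint by (fastforce simp: fire_def)
qed

locale safe_unfolding =
  fixes P T :: "'a set" and F :: "('a \<times> 'a) set" and M0 :: "'a \<Rightarrow> nat"
    and Cs Es :: "'n set" and G :: "('n \<times> 'n) set" and h :: "'n \<Rightarrow> 'a"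
  assumes net_system: "net_system P T F M0"
    and safe: "one_safe T F M0"
    and unfolds: "is_unfolding P T F M0 Cs Es G h"
begin

lemma branching_process: "branching_process P T F M0 Cs Es G h"
  using unfolds by (simp add: is_unfolding_def)

lemma label_event: "e \<in> Es \<Longrightarrow> h e \<in> T"
  using branching_process by (auto simp: branching_process_def)

lemma pre_bij: "e \<in> Es \<Longrightarrow> bij_betw h (pre G e) (pre F (h e))"
  and post_bij: "e \<in> Es \<Longrightarrow> bij_betw h (post G e) (post F (h e))"
  using branching_process by (simp_all add: branching_process_def)

lemma image_pre: "e \<in> Es \<Longrightarrow> h ` pre G e = pre F (h e)"
  and image_post: "e \<in> Es \<Longrightarrow> h ` post G e = post F (h e)"
  using pre_bij post_bij by (simp_all add: bij_betw_def)

lemma Min_conds_bij: "bij_betw h (Min_conds Cs G) {p\<in>P. M0 p \<ge> 1}"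
  using branching_process by (simp add: branching_process_def)

lemma event_determined:
  "e1 \<in> Es \<Longrightarrow> e2 \<in> Es \<Longrightarrow> pre G e1 = pre G e2 \<Longrightarrow> h e1 = h e2 \<Longrightarrow> e1 = e2"
  using branching_process by (simp add: branching_process_def)

lemma unfolding_has_event:
  "t \<in> T \<Longrightarrow> B \<subseteq> Cs \<Longrightarrow> (\<forall>x\<in>B. \<forall>y\<in>B. x \<noteq> y \<longrightarrow> co Cs Es G x y) \<Longrightarrow>
   bij_betw h B (pre F t) \<Longrightarrow> \<exists>e\<in>Es. pre G e = B \<and> h e = t"
  using unfolds by (simp add: is_unfolding_def)

lemma petri_net: "petri_net P T F"
  using net_system by (simp add: net_system_def)

lemma pre_trans_places: "t \<in> T \<Longrightarrow> pre F t \<subseteq> P"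
  and post_trans_places: "t \<in> T \<Longrightarrow> post F t \<subseteq> P"
  and post_place_trans: "p \<in> P \<Longrightarrow> post F p \<subseteq> T"
  using petri_net by (auto simp: petri_net_def pre_def post_def)

lemma finite_pre_trans: "t \<in> T \<Longrightarrow> finite (pre F t)"
  using finite_subset[OF pre_trans_places] petri_net by (auto simp: petri_net_def)

end

sublocale safe_unfolding \<subseteq> occurrence_net Cs Es G
proof
  show "occ_net Cs Es G" using branching_process by (simp add: branching_process_def)
  fix e assume "e \<in> Es"
  then show "pre G e \<noteq> {}"
    using image_pre label_event petri_net by (fastforce simp: petri_net_def)
qed

context safe_unfolding begin

lemma initial_marking: "M0 = marking_of (h ` Cut Cs G {})"
proof
  fix p
  have "M0 \<in> reach T F M0" by (rule reach_init)
  then have "M0 p \<le> 1" using safe by (simp add: one_safe_def)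
  moreover have "h ` Cut Cs G {} = {p\<in>P. M0 p \<ge> 1}"
    using Min_conds_bij Cut_empty by (simp add: bij_betw_def)
  moreover have "M0 p > 0 \<Longrightarrow> p \<in> P" using net_system by (simp add: net_system_def)
  ultimately show "M0 p = marking_of (h ` Cut Cs G {}) p" by auto
qed

lemma fire_enabled_event:
  assumes C: "cfg C" and e: "e \<in> Es" and enabled: "pre G e \<subseteq> Cut Cs G C"
    and inj: "inj_on h (Cut Cs G C)" and R: "marking_of (h ` Cut Cs G C) \<in> reach T F M0"
  shows "enabled T F (marking_of (h ` Cut Cs G C)) (h e)"
    and "fire F (marking_of (h ` Cut Cs G C)) (h e) = marking_of (h ` Cut Cs G (insert e C))"
    and "inj_on h (Cut Cs G (insert e C))"
proof -
  let ?S = "h ` Cut Cs G C"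
  have "pre F (h e) \<subseteq> ?S" using enabled image_pre[OF e] by blast
  then show en: "enabled T F (marking_of ?S) (h e)"
    using label_event[OF e] by (auto simp: enabled_def)
  note safe_fire = fire_marking_of_safe[OF safe R en]
  have minus: "h ` (Cut Cs G C - pre G e) = ?S - pre F (h e)"
    using inj_on_image_set_diff[OF inj _ enabled] image_pre[OF e] by simp
  have image: "h ` Cut Cs G (insert e C) = (?S - pre F (h e)) \<union> post F (h e)"
    using Cut_insert_enabled[OF C e enabled] minus image_post[OF e] by (simp add: image_Un)
  then show "fire F (marking_of ?S) (h e) = marking_of (h ` Cut Cs G (insert e C))"
    using safe_fire(2) by simp
  have "inj_on h (Cut Cs G C - pre G e)" using inj by (rule inj_on_subset) auto
  moreover have "inj_on h (post G e)" using post_bij[OF e] by (simp add: bij_betw_def)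
  ultimately show "inj_on h (Cut Cs G (insert e C))"
    unfolding Cut_insert_enabled[OF C e enabled] inj_on_Un
    using safe_fire(1) minus image_post[OF e] by blast
qed

lemma reachable_Cut_marking:
  assumes "finite K" "cfg K"
  shows "inj_on h (Cut Cs G K) \<and> marking_of (h ` Cut Cs G K) \<in> reach T F M0"
proof (rule config_extension_induct[of K "{}"])
  show "cfg {}" by (simp add: config_def)
  have "inj_on h (Cut Cs G {})" using Min_conds_bij Cut_empty by (simp add: bij_betw_def)
  moreover have "marking_of (h ` Cut Cs G {}) \<in> reach T F M0"
    using initial_marking reach_init by metis
  ultimately show "inj_on h (Cut Cs G {}) \<and> marking_of (h ` Cut Cs G {}) \<in> reach T F M0" ..
next
  fix C e
  assume C: "cfg C" and e: "e \<in> Es" and enabled: "pre G e \<subseteq> Cut Cs G C"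
    and IH: "inj_on h (Cut Cs G C) \<and> marking_of (h ` Cut Cs G C) \<in> reach T F M0"
  note fire = fire_enabled_event[OF C e enabled IH[THEN conjunct1] IH[THEN conjunct2]]
  show "inj_on h (Cut Cs G (insert e C)) \<and>
      marking_of (h ` Cut Cs G (insert e C)) \<in> reach T F M0"
    using fire(3) reach_step[OF IH[THEN conjunct2] fire(1)] fire(2) by simp
qed (use assms in auto)

lemma enabled_event_exists:
  assumes K: "cfg K" and inj: "inj_on h (Cut Cs G K)" and t: "t \<in> T"
    and sub: "pre F t \<subseteq> h ` Cut Cs G K"
  shows "\<exists>e\<in>Es. h e = t \<and> pre G e = Cut Cs G K \<inter> h -` pre F t"
proof -
  let ?B = "Cut Cs G K \<inter> h -` pre F t"
  have bij: "bij_betw h ?B (pre F t)"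
    using sub inj_on_subset[OF inj] by (auto simp: bij_betw_def)
  have conds: "?B \<subseteq> Cs" using Cut_subset_conds[OF K] by auto
  have "\<forall>x\<in>?B. \<forall>y\<in>?B. x \<noteq> y \<longrightarrow> co Cs Es G x y" using Cut_pairwise_co[OF K] by auto
  then obtain e where "e \<in> Es" "pre G e = ?B" "h e = t"
    using unfolding_has_event[OF t conds _ bij] by blast
  then show ?thesis by blast
qed

lemma reachable_marking_Cut:
  "M \<in> reach T F M0 \<Longrightarrow> \<exists>K. finite K \<and> cfg K \<and> M = marking_of (h ` Cut Cs G K)"
proof (induction rule: reach.induct)
  case reach_init
  have "cfg {}" by (simp add: config_def)
  then show ?case using initial_marking by blast
next
  case (reach_step M t)
  then obtain K where K: "finite K" "cfg K" "M = marking_of (h ` Cut Cs G K)" by blast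
  have inj: "inj_on h (Cut Cs G K)" using reachable_Cut_marking K by blast
  have t: "t \<in> T" and sub: "pre F t \<subseteq> h ` Cut Cs G K"
    using reach_step(2) K(3) by (auto simp: enabled_def split: if_splits)
  obtain e where e: "e \<in> Es" "h e = t" and enabled: "pre G e \<subseteq> Cut Cs G K"
    using enabled_event_exists[OF K(2) inj t sub] by blast
  have "fire F M t = marking_of (h ` Cut Cs G (insert e K))"
    using fire_enabled_event(2)[OF K(2) e(1) enabled inj] K(3) e(2) reachable_Cut_marking K by blast
  then show ?case using config_insert_enabled[OF K(2) e(1) enabled] K(1) by blast
qed

text \<open>Fire the events of \<open>K - {e}\<close> first and \<open>h e\<close> last.\<close>
lemma tar_of_maximal_event:
  assumes K: "finite K" "cfg K" and e: "e \<in> K" "\<forall>f\<in>K. (e, f) \<notin> G\<^sup>+"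
    and t: "t \<in> T" and sub: "pre F t \<subseteq> h ` Cut Cs G K"
  shows "tar T F M0 (h e) t"
proof -
  have K': "cfg (K - {e})" using config_remove_maximal[OF K(2) e] .
  have enabled: "pre G e \<subseteq> Cut Cs G (K - {e})" using pre_maximal_subset_Cut[OF K(2) e] .
  have eE: "e \<in> Es" using e(1) config_subset_events[OF K(2)] by auto
  have m: "inj_on h (Cut Cs G (K - {e}))" "marking_of (h ` Cut Cs G (K - {e})) \<in> reach T F M0"
    using reachable_Cut_marking[OF _ K'] K(1) by auto
  note fire = fire_enabled_event[OF K' eE enabled m]
  have "insert e (K - {e}) = K" using e(1) by auto
  then have "enabled T F (fire F (marking_of (h ` Cut Cs G (K - {e}))) (h e)) t"
    using fire(2) sub t by (auto simp: enabled_def)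
  then show ?thesis unfolding tar_def using fire(1) m(2) by blast
qed

end

section \<open>Isomorphic futures of configurations with equal markings\<close>

context safe_unfolding begin

abbreviation "up X \<equiv> up_nodes Cs Es G X"
abbreviation "ext X \<equiv> ext_events Cs Es G X"

definition mark_equivalent :: "'n set \<Rightarrow> 'n set \<Rightarrow> bool" where
  "mark_equivalent X1 X2 \<longleftrightarrow> finite X1 \<and> cfg X1 \<and> finite X2 \<and> cfg X2 \<and>
     h ` Cut Cs G X1 = h ` Cut Cs G X2"

lemma mark_equivalent_sym: "mark_equivalent X1 X2 \<Longrightarrow> mark_equivalent X2 X1"
  by (auto simp: mark_equivalent_def)

text \<open>The graph of the isomorphism between \<open>\<Up>X1\<close> and \<open>\<Up>X2\<close>, built along the two futures.\<close>
inductive future_rel :: "'n set \<Rightarrow> 'n set \<Rightarrow> 'n \<Rightarrow> 'n \<Rightarrow> bool" for X1 X2 where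
  cut: "c \<in> Cut Cs G X1 \<Longrightarrow> d \<in> Cut Cs G X2 \<Longrightarrow> h c = h d \<Longrightarrow> future_rel X1 X2 c d"
| event: "f \<in> ext X1 \<Longrightarrow> g \<in> ext X2 \<Longrightarrow> h f = h g \<Longrightarrow>
     \<forall>c\<in>pre G f. \<exists>d\<in>pre G g. future_rel X1 X2 c d \<Longrightarrow>
     \<forall>d\<in>pre G g. \<exists>c\<in>pre G f. future_rel X1 X2 c d \<Longrightarrow> future_rel X1 X2 f g"
| post: "future_rel X1 X2 f g \<Longrightarrow> f \<in> Es \<Longrightarrow> c \<in> post G f \<Longrightarrow> d \<in> post G g \<Longrightarrow>
     h c = h d \<Longrightarrow> future_rel X1 X2 c d"

lemma future_rel_label: "future_rel X1 X2 x y \<Longrightarrow> h x = h y"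
  by (induction rule: future_rel.induct) auto

context
  fixes X1 X2 assumes equiv: "mark_equivalent X1 X2"
begin

lemma mark_equivalent_configs: "cfg X1" "cfg X2" "finite X1" "finite X2"
  using equiv by (auto simp: mark_equivalent_def)

lemma future_rel_nodes: "future_rel X1 X2 x y \<Longrightarrow> (x \<in> Cs \<and> y \<in> Cs) \<or> (x \<in> ext X1 \<and> y \<in> ext X2)"
proof (induction rule: future_rel.induct)
  case (cut c d) then show ?case using Cut_subset_conds mark_equivalent_configs by blast
next
  case (post f g c d)
  then have "g \<in> Es" using ext_events_subset conds_events_disjoint by blast
  then show ?case using post_subset_conds post by blast
qed auto

lemma future_rel_event: "future_rel X1 X2 x y \<Longrightarrow> x \<in> Es \<Longrightarrow> x \<in> ext X1 \<and> y \<in> ext X2"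
  using future_rel_nodes conds_events_disjoint by blast

lemma future_rel_cond:
  assumes r: "future_rel X1 X2 c d" and cC: "c \<in> Cs"
  shows "(c \<in> Cut Cs G X1 \<and> d \<in> Cut Cs G X2) \<or> (\<exists>f g. future_rel X1 X2 f g \<and>
     f \<in> ext X1 \<and> g \<in> ext X2 \<and> c \<in> post G f \<and> d \<in> post G g)"
  using r
proof (cases rule: future_rel.cases)
  case event
  then show ?thesis using cC ext_events_subset conds_events_disjoint by blast
next
  case (post f g) then show ?thesis using future_rel_event by blast
qed auto

lemma future_rel_pre:
  assumes r: "future_rel X1 X2 f g" and fE: "f \<in> Es"
  shows "rel_set (future_rel X1 X2) (pre G f) (pre G g)"
  using r
proof (cases rule: future_rel.cases)
  case cut then show ?thesis using Cut_subset_conds mark_equivalent_configs fE conds_events_disjoint by blast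
next
  case post then show ?thesis using post_subset_conds fE conds_events_disjoint by blast
qed (auto simp: rel_set_def)

end

lemma future_rel_sym:
  assumes equiv: "mark_equivalent X1 X2"
  shows "future_rel X1 X2 x y \<Longrightarrow> future_rel X2 X1 y x"
proof (induction rule: future_rel.induct)
  case (cut c d) then show ?case by (simp add: future_rel.cut)
next
  case (event f g)
  then show ?case by (intro future_rel.event) auto
next
  case (post f g c d)
  then have "g \<in> Es" using future_rel_event[OF equiv] ext_events_subset by blast
  then show ?case using post future_rel.post[of X2 X1 g f d c] by auto
qed

lemma future_rel_functional:
  assumes equiv: "mark_equivalent X1 X2"
  shows "future_rel X1 X2 x y \<Longrightarrow> future_rel X1 X2 x y' \<Longrightarrow> y' = y"
proof (induction arbitrary: y' rule: future_rel.induct)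
  case (cut c d)
  have cC: "c \<in> Cs" using Cut_subset_conds mark_equivalent_configs[OF equiv] cut by blast
  from future_rel_cond[OF equiv cut(4) cC] show ?case
  proof
    assume "c \<in> Cut Cs G X1 \<and> y' \<in> Cut Cs G X2"
    moreover have "inj_on h (Cut Cs G X2)" using reachable_Cut_marking mark_equivalent_configs[OF equiv] by blast
    ultimately show ?thesis using future_rel_label[OF cut(4)] cut(2,3) by (auto dest: inj_onD)
  qed (use Cut_disjoint_post_ext[OF _ cut(1)] mark_equivalent_configs[OF equiv] in blast)
next
  case (event f g)
  have fE: "f \<in> Es" using event(1) ext_events_subset by auto
  have y': "y' \<in> ext X2" using future_rel_event[OF equiv event(6) fE] by simp
  have "rel_set (future_rel X1 X2) (pre G f) (pre G g)"
    using event(4,5) unfolding rel_set_def by blast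
  moreover have "rel_set (future_rel X1 X2) (pre G f) (pre G y')"
    using future_rel_pre[OF equiv event(6) fE] .
  moreover have "d = d'" if "c \<in> pre G f" "future_rel X1 X2 c d" "future_rel X1 X2 c d'" for c d d'
    using event(4) that by blast
  ultimately have "pre G y' = pre G g" using rel_set_unique_eq by metis
  moreover have "h y' = h g" using future_rel_label[OF event(6)] event(3) by simp
  ultimately show ?case using event_determined y' event(2) ext_events_subset by blast
next
  case (post f g c d)
  have f: "f \<in> ext X1" and g: "g \<in> ext X2" using future_rel_event[OF equiv post(1,2)] by auto
  have cC: "c \<in> Cs" using post_subset_conds post(2,3) by auto
  from future_rel_cond[OF equiv post(7) cC] show ?case
  proof
    assume "c \<in> Cut Cs G X1 \<and> y' \<in> Cut Cs G X2"
    then show ?thesis using Cut_disjoint_post_ext[OF _ _ f] post(3) mark_equivalent_configs[OF equiv] by blast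
  next
    assume "\<exists>f g. future_rel X1 X2 f g \<and> f \<in> ext X1 \<and> g \<in> ext X2 \<and>
      c \<in> post G f \<and> y' \<in> post G g"
    then obtain f' g' where fg: "future_rel X1 X2 f' g'" "c \<in> post G f'" "y' \<in> post G g'" by blast
    have "f' = f" using cond_pre_unique[OF _ _ cC] fg(2) post(3) by (auto simp: post_def)
    then have "g' = g" using post.IH fg(1) by simp
    moreover have "h y' = h d" using future_rel_label[OF post(7)] post(5) by simp
    moreover have "inj_on h (post G g)" using post_bij g ext_events_subset by (auto simp: bij_betw_def)
    ultimately show ?thesis using fg(3) post(4) by (auto dest: inj_onD)
  qed
qed

lemma future_rel_injective:
  "mark_equivalent X1 X2 \<Longrightarrow> future_rel X1 X2 x y \<Longrightarrow> future_rel X1 X2 x' y \<Longrightarrow> x = x'"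
  using future_rel_functional[OF mark_equivalent_sym] future_rel_sym by metis

end

context safe_unfolding begin

lemma future_rel_partner_event:
  assumes equiv: "mark_equivalent X1 X2"
    and C: "cfg C" "X1 \<subseteq> C" and f: "f \<in> Es" and enabled: "pre G f \<subseteq> Cut Cs G C"
    and K: "cfg K" "finite K" "X2 \<subseteq> K"
    and cuts: "rel_set (future_rel X1 X2) (Cut Cs G C) (Cut Cs G K)"
  obtains g where "g \<in> Es" "future_rel X1 X2 f g"
    "pre G g = {d \<in> Cut Cs G K. \<exists>c\<in>pre G f. future_rel X1 X2 c d}"
proof -
  let ?B = "{d \<in> Cut Cs G K. \<exists>c\<in>pre G f. future_rel X1 X2 c d}"
  have "rel_set (future_rel X1 X2) (pre G f) ?B"
    using rel_setD1[OF cuts] enabled unfolding rel_set_def by blast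
  then have "h ` pre G f = h ` ?B" by (rule rel_set_image_eq[where f = h]) (rule future_rel_label)
  then have image: "h ` ?B = pre F (h f)" using image_pre[OF f] by simp
  have inj: "inj_on h (Cut Cs G K)" using reachable_Cut_marking[OF K(2,1)] by blast
  have bij: "bij_betw h ?B (pre F (h f))"
    using image inj_on_subset[OF inj] by (auto simp: bij_betw_def)
  have conds: "?B \<subseteq> Cs" using Cut_subset_conds[OF K(1)] by blast
  have "\<forall>x\<in>?B. \<forall>y\<in>?B. x \<noteq> y \<longrightarrow> co Cs Es G x y" using Cut_pairwise_co[OF K(1)] by blast
  then obtain g where g: "g \<in> Es" "pre G g = ?B" "h g = h f"
    using unfolding_has_event[OF label_event[OF f] conds _ bij] by blast
  have g_enabled: "pre G g \<subseteq> Cut Cs G K" using g(2) by blast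
  note X = mark_equivalent_configs[OF equiv]
  have "f \<in> ext X1" using enabled_in_ext_events[OF C(1) X(1) C(2) f enabled] .
  moreover have "g \<in> ext X2" using enabled_in_ext_events[OF K(1) X(2) K(3) g(1) g_enabled] .
  moreover have "\<forall>c\<in>pre G f. \<exists>d\<in>pre G g. future_rel X1 X2 c d"
    using rel_setD1[OF cuts] enabled g(2) by blast
  moreover have "\<forall>d\<in>pre G g. \<exists>c\<in>pre G f. future_rel X1 X2 c d" using g(2) by blast
  ultimately have "future_rel X1 X2 f g" using future_rel.event g(3) by simp
  then show thesis using that g by blast
qed

lemma future_rel_Cut_insert:
  assumes equiv: "mark_equivalent X1 X2"
    and C: "cfg C" and f: "f \<in> Es" and f_enabled: "pre G f \<subseteq> Cut Cs G C"
    and K: "cfg K" and g: "g \<in> Es" and g_enabled: "pre G g \<subseteq> Cut Cs G K"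
    and cuts: "rel_set (future_rel X1 X2) (Cut Cs G C) (Cut Cs G K)"
    and fg: "future_rel X1 X2 f g"
    and pre_g: "pre G g = {d \<in> Cut Cs G K. \<exists>c\<in>pre G f. future_rel X1 X2 c d}"
  shows "rel_set (future_rel X1 X2) (Cut Cs G (insert f C)) (Cut Cs G (insert g K))"
  unfolding rel_set_def Cut_insert_enabled[OF C f f_enabled] Cut_insert_enabled[OF K g g_enabled]
proof (intro conjI ballI)
  have post: "h ` post G f = h ` post G g"
    using image_post f g future_rel_label[OF fg] by simp
  fix c assume "c \<in> Cut Cs G C - pre G f \<union> post G f"
  then show "\<exists>d\<in>Cut Cs G K - pre G g \<union> post G g. future_rel X1 X2 c d"
  proof
    assume c: "c \<in> Cut Cs G C - pre G f"
    then obtain d where d: "d \<in> Cut Cs G K" "future_rel X1 X2 c d" using rel_setD1[OF cuts] by blast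
    have "d \<notin> pre G g" using c d pre_g future_rel_injective[OF equiv d(2)] by blast
    then show ?thesis using d by blast
  next
    assume c: "c \<in> post G f"
    then obtain d where "d \<in> post G g" "h c = h d" using post by (metis imageE imageI)
    then show ?thesis using future_rel.post[OF fg f c] by blast
  qed
next
  have post: "h ` post G f = h ` post G g"
    using image_post f g future_rel_label[OF fg] by simp
  fix d assume "d \<in> Cut Cs G K - pre G g \<union> post G g"
  then show "\<exists>c\<in>Cut Cs G C - pre G f \<union> post G f. future_rel X1 X2 c d"
  proof
    assume d: "d \<in> Cut Cs G K - pre G g"
    then obtain c where c: "c \<in> Cut Cs G C" "future_rel X1 X2 c d" using rel_setD2[OF cuts] by blast
    have "c \<notin> pre G f" using c d pre_g by blast
    then show ?thesis using c by blast
  next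
    assume d: "d \<in> post G g"
    then obtain c where "c \<in> post G f" "h c = h d" using post by (metis imageE imageI)
    then show ?thesis using future_rel.post[OF fg f _ d] by blast
  qed
qed

lemma future_rel_Cut_base:
  assumes "mark_equivalent X1 X2"
  shows "rel_set (future_rel X1 X2) (Cut Cs G X1) (Cut Cs G X2)"
  unfolding rel_set_def
proof (intro conjI ballI)
  have image: "h ` Cut Cs G X1 = h ` Cut Cs G X2" using assms by (simp add: mark_equivalent_def)
  fix c assume c: "c \<in> Cut Cs G X1"
  then obtain d where "d \<in> Cut Cs G X2" "h c = h d" using image by (metis imageE imageI)
  then show "\<exists>d\<in>Cut Cs G X2. future_rel X1 X2 c d" using future_rel.cut[OF c] by blast
next
  have image: "h ` Cut Cs G X1 = h ` Cut Cs G X2" using assms by (simp add: mark_equivalent_def)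
  fix d assume d: "d \<in> Cut Cs G X2"
  then obtain c where "c \<in> Cut Cs G X1" "h c = h d" using image by (metis imageE imageI)
  then show "\<exists>c\<in>Cut Cs G X1. future_rel X1 X2 c d" using future_rel.cut[OF _ d] by blast
qed

lemma future_rel_extension:
  assumes equiv: "mark_equivalent X1 X2" and K1: "finite K1" "cfg K1" "X1 \<subseteq> K1"
  shows "\<exists>K2. finite K2 \<and> cfg K2 \<and> X2 \<subseteq> K2 \<and>
    rel_set (future_rel X1 X2) (K1 - X1) (K2 - X2) \<and>
    rel_set (future_rel X1 X2) (Cut Cs G K1) (Cut Cs G K2)"
    (is "\<exists>K2. ?matched K1 K2")
proof (rule config_extension_induct[OF K1(1) _ K1(3) K1(2)])
  note X = mark_equivalent_configs[OF equiv]
  show "cfg X1" using X by simp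
  have "rel_set (future_rel X1 X2) (X1 - X1) (X2 - X2)" by (simp add: rel_set_def)
  then show "\<exists>K2. ?matched X1 K2"
    using X future_rel_Cut_base[OF equiv] by blast
next
  fix C e
  assume C: "cfg C" "X1 \<subseteq> C" and e: "e \<in> Es" and e_enabled: "pre G e \<subseteq> Cut Cs G C"
    and "\<exists>K2. ?matched C K2"
  then obtain K2 where K2: "finite K2" "cfg K2" "X2 \<subseteq> K2"
    and events: "rel_set (future_rel X1 X2) (C - X1) (K2 - X2)"
    and cuts: "rel_set (future_rel X1 X2) (Cut Cs G C) (Cut Cs G K2)" by blast
  obtain g where g: "g \<in> Es" "future_rel X1 X2 e g"
    and pre_g: "pre G g = {d \<in> Cut Cs G K2. \<exists>c\<in>pre G e. future_rel X1 X2 c d}"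
    using future_rel_partner_event[OF equiv C e e_enabled K2(2,1,3) cuts] by blast
  have g_enabled: "pre G g \<subseteq> Cut Cs G K2" using pre_g by blast
  have "insert e C - X1 = insert e (C - X1)" "insert g K2 - X2 = insert g (K2 - X2)"
    using enabled_not_in_config[OF C(1) e e_enabled] enabled_not_in_config[OF K2(2) g(1) g_enabled]
      C(2) K2(3) by auto
  then have "rel_set (future_rel X1 X2) (insert e C - X1) (insert g K2 - X2)"
    using rel_set_insert[OF events g(2)] by simp
  moreover have "rel_set (future_rel X1 X2) (Cut Cs G (insert e C)) (Cut Cs G (insert g K2))"
    using future_rel_Cut_insert[OF equiv C(1) e e_enabled K2(2) g(1) g_enabled cuts g(2) pre_g] .
  moreover have "finite (insert g K2)" "cfg (insert g K2)" "X2 \<subseteq> insert g K2"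
    using config_insert_enabled[OF K2(2) g(1) g_enabled] K2 by auto
  ultimately show "\<exists>K2. ?matched (insert e C) K2" by blast
qed

end

context safe_unfolding begin

lemma future_rel_up:
  assumes equiv: "mark_equivalent X1 X2"
  shows "future_rel X1 X2 x y \<Longrightarrow> x \<in> up X1 \<and> y \<in> up X2"
proof (induction rule: future_rel.induct)
  case (post f g c d)
  have "f \<in> ext X1" "g \<in> ext X2" using future_rel_event[OF equiv post(1,2)] by auto
  then show ?case using post by (auto simp: up_nodes_def post_set_def)
qed (auto simp: up_nodes_def)

lemma future_rel_total:
  assumes equiv: "mark_equivalent X1 X2" and x: "x \<in> up X1"
  shows "\<exists>y. future_rel X1 X2 x y"
proof -
  note X = mark_equivalent_configs[OF equiv]
  have event: "\<exists>y. future_rel X1 X2 f y" if f: "f \<in> ext X1" for f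
  proof -
    have fE: "f \<in> Es" and "f \<notin> X1" and "cfg (X1 \<union> lconf Es G f)"
      using f by (auto simp: ext_events_def)
    moreover have "finite (X1 \<union> lconf Es G f)" using finite_lconf[OF fE] X by simp
    ultimately obtain K2 where "rel_set (future_rel X1 X2) (X1 \<union> lconf Es G f - X1) (K2 - X2)"
      using future_rel_extension[OF equiv] by blast
    moreover have "f \<in> X1 \<union> lconf Es G f - X1" using lconf_self[OF fE] \<open>f \<notin> X1\<close> by blast
    ultimately show ?thesis by (blast dest: rel_setD1)
  qed
  from x consider "x \<in> Cut Cs G X1" | "x \<in> ext X1" | "x \<in> post_set G (ext X1)"
    by (auto simp: up_nodes_def)
  then show ?thesis
  proof cases
    case 1
    then show ?thesis using future_rel_Cut_base[OF equiv] by (blast dest: rel_setD1)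
  next
    case 2 then show ?thesis using event by blast
  next
    case 3
    then obtain f where f: "f \<in> ext X1" "x \<in> post G f" by (auto simp: post_set_def)
    obtain y where fy: "future_rel X1 X2 f y" using event[OF f(1)] by blast
    have fE: "f \<in> Es" using f ext_events_subset by auto
    have yE: "y \<in> Es" using future_rel_event[OF equiv fy fE] ext_events_subset by auto
    have "h x \<in> h ` post G y"
      using f(2) image_post[OF fE] image_post[OF yE] future_rel_label[OF fy] by auto
    then obtain d where "d \<in> post G y" "h x = h d" by auto
    then show ?thesis using future_rel.post[OF fy fE f(2)] by blast
  qed
qed

definition future_iso :: "'n set \<Rightarrow> 'n set \<Rightarrow> 'n \<Rightarrow> 'n" where
  "future_iso X1 X2 x = (THE y. future_rel X1 X2 x y)"

lemma future_iso_eq: "mark_equivalent X1 X2 \<Longrightarrow> future_rel X1 X2 x y \<Longrightarrow> future_iso X1 X2 x = y"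
  unfolding future_iso_def using future_rel_functional by (metis the_equality)

lemma future_rel_iso: "mark_equivalent X1 X2 \<Longrightarrow> x \<in> up X1 \<Longrightarrow> future_rel X1 X2 x (future_iso X1 X2 x)"
  using future_rel_total future_iso_eq by metis

lemma future_rel_arc_to_event:
  assumes equiv: "mark_equivalent X1 X2"
    and rx: "future_rel X1 X2 x x'" and ry: "future_rel X1 X2 y y'" and yE: "y \<in> Es"
  shows "(x, y) \<in> G \<longleftrightarrow> (x', y') \<in> G"
proof
  note pre_rel = future_rel_pre[OF equiv ry yE]
  assume "(x, y) \<in> G"
  then obtain d where "d \<in> pre G y'" "future_rel X1 X2 x d"
    using rel_setD1[OF pre_rel] by (auto simp: pre_def)
  then show "(x', y') \<in> G" using future_rel_functional[OF equiv rx] by (auto simp: pre_def)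
next
  note pre_rel = future_rel_pre[OF equiv ry yE]
  assume "(x', y') \<in> G"
  then obtain c where "c \<in> pre G y" "future_rel X1 X2 c x'"
    using rel_setD2[OF pre_rel] by (auto simp: pre_def)
  then show "(x, y) \<in> G" using future_rel_injective[OF equiv rx] by (auto simp: pre_def)
qed

lemma future_rel_arc_to_cond:
  assumes equiv: "mark_equivalent X1 X2"
    and rx: "future_rel X1 X2 x x'" and ry: "future_rel X1 X2 y y'"
    and x: "x \<in> ext X1" "x' \<in> ext X2" and yC: "y \<in> Cs" "y' \<in> Cs"
  shows "(x, y) \<in> G \<longleftrightarrow> (x', y') \<in> G"
  using future_rel_cond[OF equiv ry yC(1)]
proof
  assume "y \<in> Cut Cs G X1 \<and> y' \<in> Cut Cs G X2"
  then show ?thesis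
    using Cut_disjoint_post_ext x mark_equivalent_configs[OF equiv] by (auto simp: post_def)
next
  assume "\<exists>f g. future_rel X1 X2 f g \<and> f \<in> ext X1 \<and> g \<in> ext X2 \<and> y \<in> post G f \<and> y' \<in> post G g"
  then obtain f g where fg: "future_rel X1 X2 f g" and post: "(f, y) \<in> G" "(g, y') \<in> G"
    by (auto simp: post_def)
  show ?thesis
  proof
    assume "(x, y) \<in> G"
    then have "x = f" using cond_pre_unique[OF _ post(1) yC(1)] by blast
    then show "(x', y') \<in> G" using future_rel_functional[OF equiv fg] rx post(2) by blast
  next
    assume "(x', y') \<in> G"
    then have "x' = g" using cond_pre_unique[OF _ post(2) yC(2)] by blast
    then show "(x, y) \<in> G" using future_rel_injective[OF equiv fg] rx post(1) by blast
  qed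
qed

lemma future_rel_arc_iff:
  assumes equiv: "mark_equivalent X1 X2"
    and rx: "future_rel X1 X2 x x'" and ry: "future_rel X1 X2 y y'"
  shows "(x, y) \<in> G \<longleftrightarrow> (x', y') \<in> G"
proof -
  note nodes = future_rel_nodes[OF equiv] ext_events_subset conds_events_disjoint
  consider "y \<in> Es" | "x \<in> ext X1" "x' \<in> ext X2" "y \<in> Cs" "y' \<in> Cs" | "x \<in> Cs" "x' \<in> Cs" "y \<in> Cs" "y' \<in> Cs"
    using nodes(1)[OF rx] nodes(1)[OF ry] nodes(2) by blast
  then show ?thesis
  proof cases
    case 1 then show ?thesis using future_rel_arc_to_event[OF equiv rx ry] by blast
  next
    case 2 then show ?thesis using future_rel_arc_to_cond[OF equiv rx ry] by blast
  next
    case 3 then show ?thesis using arc_from_cond conds_events_disjoint by blast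
  qed
qed

text \<open>The isomorphism of \<open>\<Up>X1\<close> and \<open>\<Up>X2\<close> required by the definition of an adequate order.\<close>
lemma future_iso:
  assumes equiv: "mark_equivalent X1 X2"
  shows "bij_betw (future_iso X1 X2) (up X1) (up X2)"
    and "\<forall>x\<in>up X1. h (future_iso X1 X2 x) = h x"
    and "\<forall>x\<in>up X1. \<forall>y\<in>up X1. (x, y) \<in> G \<longleftrightarrow> (future_iso X1 X2 x, future_iso X1 X2 y) \<in> G"
proof -
  note rel = future_rel_iso[OF equiv]
  show "bij_betw (future_iso X1 X2) (up X1) (up X2)"
    unfolding bij_betw_def
  proof
    show "inj_on (future_iso X1 X2) (up X1)"
      using rel future_rel_injective[OF equiv] by (metis inj_onI)
    show "future_iso X1 X2 ` up X1 = up X2"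
    proof
      show "future_iso X1 X2 ` up X1 \<subseteq> up X2" using rel future_rel_up[OF equiv] by blast
      show "up X2 \<subseteq> future_iso X1 X2 ` up X1"
      proof
        fix y assume "y \<in> up X2"
        then obtain x where "future_rel X2 X1 y x"
          using future_rel_total[OF mark_equivalent_sym[OF equiv]] by blast
        then have r: "future_rel X1 X2 x y" using future_rel_sym[OF mark_equivalent_sym[OF equiv]] by blast
        then show "y \<in> future_iso X1 X2 ` up X1"
          using future_iso_eq[OF equiv r] future_rel_up[OF equiv r] by blast
      qed
    qed
  qed
  show "\<forall>x\<in>up X1. h (future_iso X1 X2 x) = h x" using rel future_rel_label by metis
  show "\<forall>x\<in>up X1. \<forall>y\<in>up X1. (x, y) \<in> G \<longleftrightarrow> (future_iso X1 X2 x, future_iso X1 X2 y) \<in> G"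
    using rel future_rel_arc_iff[OF equiv] by blast
qed

end

section \<open>Every reachable marking is represented in the complete prefix\<close>

context safe_unfolding begin

lemma adequate_order_wf:
  assumes "adequate_order Cs Es G h prec"
  shows "wf {(X, Y). (cfg X \<and> finite X) \<and> (cfg Y \<and> finite Y) \<and> prec X Y}"
  using assms unfolding adequate_order_def Let_def by auto

lemma adequate_order_extension:
  assumes "adequate_order Cs Es G h prec"
    and X: "cfg X1" "finite X1" "cfg X2" "finite X2"
    and "prec X1 X2" "Mark Cs G h X1 = Mark Cs G h X2"
    and "bij_betw I (up X1) (up X2)" "\<forall>x\<in>up X1. h (I x) = h x"
      "\<forall>x\<in>up X1. \<forall>y\<in>up X1. (x, y) \<in> G \<longleftrightarrow> (I x, I y) \<in> G"
    and "finite D" "D \<inter> X1 = {}" "cfg (X1 \<union> D)"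
  shows "prec (X1 \<union> D) (X2 \<union> I ` D)"
proof -
  have adequate: "\<forall>X1\<in>{X. cfg X \<and> finite X}. \<forall>X2\<in>{X. cfg X \<and> finite X}.
      prec X1 X2 \<and> Mark Cs G h X1 = Mark Cs G h X2 \<longrightarrow>
      (\<forall>I. bij_betw I (up X1) (up X2) \<and> (\<forall>x\<in>up X1. h (I x) = h x) \<and>
           (\<forall>x\<in>up X1. \<forall>y\<in>up X1. (x, y) \<in> G \<longleftrightarrow> (I x, I y) \<in> G) \<longrightarrow>
         (\<forall>Ex. finite Ex \<and> Ex \<inter> X1 = {} \<and> cfg (X1 \<union> Ex) \<longrightarrow> prec (X1 \<union> Ex) (X2 \<union> I ` Ex)))"
    using assms(1) unfolding adequate_order_def Let_def by (elim conjE)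
  show ?thesis by (rule adequate[rule_format]) (use assms in simp_all)
qed

lemma future_iso_image:
  assumes equiv: "mark_equivalent X1 X2" and "rel_set (future_rel X2 X1) B A"
  shows "future_iso X1 X2 ` A = B"
proof -
  have iso: "future_rel X2 X1 b a \<Longrightarrow> future_iso X1 X2 a = b" for a b
    using future_iso_eq[OF equiv] future_rel_sym[OF mark_equivalent_sym[OF equiv]] by blast
  show ?thesis
  proof
    show "future_iso X1 X2 ` A \<subseteq> B" using rel_setD2[OF assms(2)] iso by blast
    show "B \<subseteq> future_iso X1 X2 ` A" using rel_setD1[OF assms(2)] iso by (fastforce simp: image_iff)
  qed
qed

text \<open>The part of \<open>z\<close> above \<open>[e]\<close> is transported to the future of the corresponding event.\<close>
lemma cutoff_config_reducible:
  assumes adequate: "adequate_order Cs Es G h prec"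
    and z: "finite z" "cfg z" and e: "e \<in> z" and cutoff: "cutoff Cs Es G h prec e"
  obtains z' where "finite z'" "cfg z'" "h ` Cut Cs G z' = h ` Cut Cs G z" "prec z' z"
proof -
  obtain e' where "corresponding Cs Es G h prec e e'" using cutoff by (auto simp: cutoff_def)
  then have eE: "e \<in> Es" and e'E: "e' \<in> Es"
    and mark: "Mark Cs G h (lconf Es G e) = Mark Cs G h (lconf Es G e')"
    and smaller: "prec (lconf Es G e') (lconf Es G e)" by (auto simp: corresponding_def)
  define X1 where "X1 = lconf Es G e'"
  define X2 where "X2 = lconf Es G e"
  have X: "cfg X1" "finite X1" "cfg X2" "finite X2"
    using config_lconf finite_lconf eE e'E X1_def X2_def by auto
  have equiv: "mark_equivalent X1 X2"
    using X mark unfolding mark_equivalent_def X1_def X2_def Mark_def by simp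
  have X2z: "X2 \<subseteq> z" using lconf_subset_config[OF z(2) e] X2_def by simp
  obtain K2 where K2: "finite K2" "cfg K2" "X1 \<subseteq> K2"
    and events: "rel_set (future_rel X2 X1) (z - X2) (K2 - X1)"
    and cuts: "rel_set (future_rel X2 X1) (Cut Cs G z) (Cut Cs G K2)"
    using future_rel_extension[OF mark_equivalent_sym[OF equiv] z X2z] by blast
  have marks: "Mark Cs G h X1 = Mark Cs G h X2" using mark X1_def X2_def by simp
  have union: "X1 \<union> (K2 - X1) = K2" using K2(3) by blast
  have "finite (K2 - X1)" "(K2 - X1) \<inter> X1 = {}" "cfg (X1 \<union> (K2 - X1))"
    using K2 union by auto
  note transported = adequate_order_extension[OF adequate X smaller[folded X1_def X2_def] marks
      future_iso[OF equiv] this]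
  moreover note union
  moreover have "X2 \<union> future_iso X1 X2 ` (K2 - X1) = z"
    using future_iso_image[OF equiv events] X2z by blast
  moreover have "h ` Cut Cs G K2 = h ` Cut Cs G z"
    using rel_set_image_eq[OF cuts future_rel_label] by simp
  ultimately show thesis using that K2 by simp
qed

lemma cutoff_free_config_exists:
  assumes adequate: "adequate_order Cs Es G h prec" and C: "finite C" "cfg C"
  obtains C' where "finite C'" "cfg C'" "h ` Cut Cs G C' = h ` Cut Cs G C"
    "\<forall>e\<in>C'. \<not> cutoff Cs Es G h prec e"
proof -
  let ?same = "{X. (cfg X \<and> finite X) \<and> h ` Cut Cs G X = h ` Cut Cs G C}"
  have "C \<in> ?same" using C by simp
  obtain z where z: "z \<in> ?same"
    and minimal: "\<And>y. (y, z) \<in> {(X, Y). (cfg X \<and> finite X) \<and> (cfg Y \<and> finite Y) \<and> prec X Y} \<Longrightarrow>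
      y \<notin> ?same"
    using wfE_min[OF adequate_order_wf[OF adequate] \<open>C \<in> ?same\<close>] by blast
  have "\<not> cutoff Cs Es G h prec e" if e: "e \<in> z" for e
  proof
    assume "cutoff Cs Es G h prec e"
    moreover have "finite z" "cfg z" using z by auto
    ultimately obtain z' where z': "finite z'" "cfg z'" "h ` Cut Cs G z' = h ` Cut Cs G z" "prec z' z"
      using cutoff_config_reducible[OF adequate _ _ e] by blast
    then have "z' \<in> ?same" using z by simp
    moreover have "(z', z) \<in> {(X, Y). (cfg X \<and> finite X) \<and> (cfg Y \<and> finite Y) \<and> prec X Y}"
      using z z' by simp
    ultimately show False using minimal by blast
  qed
  then show thesis using that[of z] z by simp
qed

end

section \<open>The complete prefix as a subnet\<close>

context occurrence_net begin

lemma config_nodes_backward_closed: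
  assumes K: "cfg K" and x: "x \<in> K \<union> Min_conds Cs G \<union> post_set G K" and yx: "(y, x) \<in> G"
  shows "y \<in> K \<union> Min_conds Cs G \<union> post_set G K"
  using x
proof (elim UnE)
  assume "x \<in> K"
  then have xE: "x \<in> Es" using config_subset_events[OF K] by blast
  have yC: "y \<in> Cs" using arc_to_event[OF yx xE] .
  show ?thesis
  proof (cases "pre G y = {}")
    case True then show ?thesis using yC by (simp add: Min_conds_def)
  next
    case False
    then obtain g where gy: "(g, y) \<in> G" by (auto simp: pre_def)
    have "(g, x) \<in> G\<^sup>+" using gy yx by auto
    then have "g \<in> K" using config_downward[OF K \<open>x \<in> K\<close> arc_to_cond[OF gy yC]] by simp
    then show ?thesis using gy by (auto simp: post_set_def post_def)
  qed
next
  assume "x \<in> Min_conds Cs G"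
  then show ?thesis using yx by (auto simp: Min_conds_def pre_def)
next
  assume "x \<in> post_set G K"
  then obtain g where g: "g \<in> K" "(g, x) \<in> G" by (auto simp: post_set_def post_def)
  have "x \<in> Cs" using arc_from_event[OF g(2)] g(1) config_subset_events[OF K] by blast
  then have "y = g" using cond_pre_unique[OF yx g(2)] by blast
  then show ?thesis using g by simp
qed

end

context safe_unfolding begin

abbreviation "pnodes prec \<equiv> prefix_nodes Cs Es G h prec"
abbreviation "parcs prec \<equiv> G \<inter> (pnodes prec \<times> pnodes prec)"

lemma pnodes_subset: "pnodes prec \<subseteq> Cs \<union> Es"
  by (auto simp: prefix_nodes_def)

lemma pnodes_backward: "y \<in> pnodes prec \<Longrightarrow> (z, y) \<in> G \<Longrightarrow> z \<in> pnodes prec"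
  unfolding prefix_nodes_def by blast

lemma subset_pnodesI:
  assumes "X \<subseteq> Cs \<union> Es" "\<forall>x\<in>X. \<forall>y. (y, x) \<in> G \<longrightarrow> y \<in> X"
    "\<forall>e\<in>X \<inter> Es. \<forall>e'. lt G e' e \<longrightarrow> \<not> cutoff Cs Es G h prec e'"
  shows "X \<subseteq> pnodes prec"
  using assms unfolding prefix_nodes_def by blast

lemma cutoff_event: "cutoff Cs Es G h prec e \<Longrightarrow> e \<in> Es"
  by (auto simp: cutoff_def corresponding_def)

lemma config_subset_pnodes:
  assumes K: "cfg K" and no_cutoff: "\<forall>f\<in>K. \<forall>e. (e, f) \<in> G\<^sup>+ \<longrightarrow> \<not> cutoff Cs Es G h prec e"
  shows "K \<union> Min_conds Cs G \<union> post_set G K \<subseteq> pnodes prec"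
proof (rule subset_pnodesI)
  show "K \<union> Min_conds Cs G \<union> post_set G K \<subseteq> Cs \<union> Es"
    using config_subset_events[OF K] post_subset_conds by (fastforce simp: post_set_def Min_conds_def)
  show "\<forall>x\<in>K \<union> Min_conds Cs G \<union> post_set G K. \<forall>y. (y, x) \<in> G \<longrightarrow>
      y \<in> K \<union> Min_conds Cs G \<union> post_set G K"
    using config_nodes_backward_closed[OF K] by blast
  have "(Min_conds Cs G \<union> post_set G K) \<inter> Es = {}"
    using post_subset_conds config_subset_events[OF K] conds_events_disjoint
    by (fastforce simp: post_set_def Min_conds_def)
  then show "\<forall>e\<in>(K \<union> Min_conds Cs G \<union> post_set G K) \<inter> Es. \<forall>e'. lt G e' e \<longrightarrow>
      \<not> cutoff Cs Es G h prec e'"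
    using no_cutoff by (auto simp: lt_def)
qed

lemma post_pnodes:
  assumes e: "e \<in> pnodes prec" "e \<in> Es" and c: "c \<in> post G e"
  shows "c \<in> pnodes prec"
proof -
  obtain X where X: "e \<in> X" "X \<subseteq> Cs \<union> Es" "\<forall>x\<in>X. \<forall>y. (y, x) \<in> G \<longrightarrow> y \<in> X"
    "\<forall>e\<in>X \<inter> Es. \<forall>e'. lt G e' e \<longrightarrow> \<not> cutoff Cs Es G h prec e'"
    using e(1) unfolding prefix_nodes_def by blast
  have ec: "(e, c) \<in> G" using c by (simp add: post_def)
  have cC: "c \<in> Cs" using arc_from_event[OF ec e(2)] .
  have "insert c X \<subseteq> pnodes prec"
  proof (rule subset_pnodesI)
    show "insert c X \<subseteq> Cs \<union> Es" using X(2) cC by auto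
    show "\<forall>x\<in>insert c X. \<forall>y. (y, x) \<in> G \<longrightarrow> y \<in> insert c X"
      using X(3) cond_pre_unique[OF ec _ cC] X(1) by blast
    show "\<forall>e\<in>insert c X \<inter> Es. \<forall>e'. lt G e' e \<longrightarrow> \<not> cutoff Cs Es G h prec e'"
      using X(4) cC conds_events_disjoint by blast
  qed
  then show ?thesis by simp
qed

lemma Cut_insert_subset_pnodes:
  assumes C: "cfg C" and no_cutoff: "\<forall>e\<in>C. \<not> cutoff Cs Es G h prec e"
    and e: "e \<in> Es" and enabled: "pre G e \<subseteq> Cut Cs G C"
  shows "insert e C \<subseteq> pnodes prec" "Cut Cs G (insert e C) \<subseteq> pnodes prec"
    "Cut Cs G C \<subseteq> pnodes prec"
proof -
  have "\<forall>f\<in>insert e C. \<forall>e'. (e', f) \<in> G\<^sup>+ \<longrightarrow> \<not> cutoff Cs Es G h prec e'"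
    using enabled_past_in_config[OF C e enabled] config_downward[OF C] no_cutoff cutoff_event
    by blast
  then have nodes: "insert e C \<union> Min_conds Cs G \<union> post_set G (insert e C) \<subseteq> pnodes prec"
    using config_subset_pnodes[OF config_insert_enabled[OF C e enabled]] by blast
  then show "insert e C \<subseteq> pnodes prec" by blast
  show "Cut Cs G (insert e C) \<subseteq> pnodes prec" using nodes by (auto simp: Cut_def)
  have "Cut Cs G C \<subseteq> Min_conds Cs G \<union> post_set G (insert e C)"
    by (auto simp: Cut_def post_set_def)
  then show "Cut Cs G C \<subseteq> pnodes prec" using nodes by blast
qed

lemma rtrancl_parcs: "(x, y) \<in> G\<^sup>* \<Longrightarrow> y \<in> pnodes prec \<Longrightarrow> x \<in> pnodes prec \<and> (x, y) \<in> (parcs prec)\<^sup>*"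
proof (induction rule: converse_rtrancl_induct)
  case (step x z)
  then have z: "z \<in> pnodes prec" "(z, y) \<in> (parcs prec)\<^sup>*" by simp_all
  moreover have "x \<in> pnodes prec" using pnodes_backward[OF z(1) step(1)] .
  ultimately show ?case using step(1) converse_rtrancl_into_rtrancl[of x z "parcs prec"] by blast
qed simp

lemma trancl_parcs: "(x, y) \<in> G\<^sup>+ \<Longrightarrow> y \<in> pnodes prec \<Longrightarrow> (x, y) \<in> (parcs prec)\<^sup>+"
proof -
  assume xy: "(x, y) \<in> G\<^sup>+" and y: "y \<in> pnodes prec"
  obtain z where xz: "(x, z) \<in> G\<^sup>*" and zy: "(z, y) \<in> G" using xy by (blast dest: tranclD2)
  have z: "z \<in> pnodes prec" using pnodes_backward[OF y zy] .
  then have "(x, z) \<in> (parcs prec)\<^sup>*" using rtrancl_parcs[OF xz] by simp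
  moreover have "(z, y) \<in> parcs prec" using zy z y by simp
  ultimately show ?thesis by (simp add: rtrancl_into_trancl1)
qed

lemma parcs_rtrancl: "(x, y) \<in> (parcs prec)\<^sup>* \<Longrightarrow> (x, y) \<in> G\<^sup>*"
  using rtrancl_mono[of "parcs prec" G] by blast

lemma lt_parcs: "y \<in> pnodes prec \<Longrightarrow> lt (parcs prec) x y \<longleftrightarrow> lt G x y"
  unfolding lt_def using trancl_parcs trancl_mono_subset[of "parcs prec" G] by blast

lemma conflict_parcs:
  assumes x: "x \<in> pnodes prec" and y: "y \<in> pnodes prec"
  shows "conflict (Cs \<inter> pnodes prec) (parcs prec) x y \<longleftrightarrow> conflict Cs G x y"
proof
  assume "conflict (Cs \<inter> pnodes prec) (parcs prec) x y"
  then show "conflict Cs G x y" unfolding conflict_def using parcs_rtrancl by blast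
next
  assume "conflict Cs G x y"
  then obtain s t1 t2 where st: "s \<in> Cs" "t1 \<noteq> t2" "(s, t1) \<in> G" "(s, t2) \<in> G"
      "(t1, x) \<in> G\<^sup>*" "(t2, y) \<in> G\<^sup>*" unfolding conflict_def by blast
  have t1: "t1 \<in> pnodes prec" "(t1, x) \<in> (parcs prec)\<^sup>*" using rtrancl_parcs[OF st(5) x] by auto
  have t2: "t2 \<in> pnodes prec" "(t2, y) \<in> (parcs prec)\<^sup>*" using rtrancl_parcs[OF st(6) y] by auto
  have s: "s \<in> pnodes prec" using pnodes_backward[OF t1(1) st(3)] .
  show "conflict (Cs \<inter> pnodes prec) (parcs prec) x y"
    unfolding conflict_def using st s t1 t2 by blast
qed

lemma co_parcs:
  assumes x: "x \<in> pnodes prec" and y: "y \<in> pnodes prec"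
  shows "co (Cs \<inter> pnodes prec) (Es \<inter> pnodes prec) (parcs prec) x y \<longleftrightarrow> co Cs Es G x y"
  using lt_parcs[OF x] lt_parcs[OF y] conflict_parcs[OF x y] x y pnodes_subset
  unfolding co_def by blast

lemma pre_parcs: "x \<in> pnodes prec \<Longrightarrow> pre (parcs prec) x = pre G x"
  using pnodes_backward by (auto simp: pre_def)

lemma post_parcs: "e \<in> pnodes prec \<Longrightarrow> e \<in> Es \<Longrightarrow> post (parcs prec) e = post G e"
  using post_pnodes by (auto simp: post_def)

lemma max_adj_parcs:
  assumes e1: "e1 \<in> pnodes prec" and e2: "e2 \<in> pnodes prec" and adj: "max_adj (parcs prec) e1 e2"
  shows "(e1, e2) \<in> G\<^sup>+" "\<forall>e\<in>pre_set G (pre G e2). (e1, e) \<notin> G\<^sup>+"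
proof -
  show "(e1, e2) \<in> G\<^sup>+" using adj lt_parcs[OF e2] by (simp add: max_adj_def lt_def)
  have in_prefix: "\<forall>e\<in>pre_set G (pre G e2). e \<in> pnodes prec"
    using e2 by (auto simp: pre_set_def pre_def intro: pnodes_backward[OF pnodes_backward[OF e2]])
  moreover have "pre_set (parcs prec) (pre (parcs prec) e2) = pre_set G (pre G e2)"
  proof -
    have "\<forall>c\<in>pre G e2. c \<in> pnodes prec" using pnodes_backward e2 by (auto simp: pre_def)
    then show ?thesis using pre_parcs[OF e2] pre_parcs by (simp add: pre_set_def)
  qed
  ultimately show "\<forall>e\<in>pre_set G (pre G e2). (e1, e) \<notin> G\<^sup>+"
    using adj lt_parcs unfolding max_adj_def Max_ev_def lt_def by auto
qed

end

section \<open>Soundness: every pair returned is transition-adjacent\<close>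

context occurrence_net begin

lemma post_subset_Cut_lconf:
  assumes e: "e \<in> Es" shows "post G e \<subseteq> Cut Cs G (lconf Es G e)"
proof -
  have "\<forall>f\<in>lconf Es G e. (e, f) \<notin> G\<^sup>+" using lconf_maximal[OF e] by blast
  then show ?thesis using Cut_remove_maximal[OF config_lconf[OF e] lconf_self[OF e]] by blast
qed

definition past_events :: "'n set \<Rightarrow> 'n set" where
  "past_events Z = {f\<in>Es. \<exists>z\<in>Z. (f, z) \<in> G\<^sup>*}"

lemma past_events_config:
  assumes Z: "finite Z" "Z \<subseteq> Cs \<union> Es" and no_conflict: "\<forall>x\<in>Z. \<forall>y\<in>Z. \<not> conflict Cs G x y"
  shows "finite (past_events Z)" and "cfg (past_events Z)"
proof -
  have "past_events Z \<subseteq> (\<Union>z\<in>Z. insert z {f. (f, z) \<in> G\<^sup>+})"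
    by (auto simp: past_events_def rtrancl_eq_or_trancl)
  moreover have "finite (\<Union>z\<in>Z. insert z {f. (f, z) \<in> G\<^sup>+})"
    using Z finite_past by blast
  ultimately show "finite (past_events Z)" by (rule finite_subset)
  show "cfg (past_events Z)"
    unfolding config_def past_events_def
  proof (intro conjI ballI impI)
    fix x e' assume "x \<in> {f\<in>Es. \<exists>z\<in>Z. (f, z) \<in> G\<^sup>*}" "e' \<in> Es" "lt G e' x"
    then show "e' \<in> {f\<in>Es. \<exists>z\<in>Z. (f, z) \<in> G\<^sup>*}"
      unfolding lt_def by (blast intro: rtrancl_trans trancl_into_rtrancl)
  next
    fix x y assume "x \<in> {f\<in>Es. \<exists>z\<in>Z. (f, z) \<in> G\<^sup>*}" "y \<in> {f\<in>Es. \<exists>z\<in>Z. (f, z) \<in> G\<^sup>*}"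
    then obtain z1 z2 where "z1 \<in> Z" "z2 \<in> Z" "(x, z1) \<in> G\<^sup>*" "(y, z2) \<in> G\<^sup>*" by blast
    then show "\<not> conflict Cs G x y" using no_conflict conflict_rtrancl_mono by blast
  qed blast
qed

context
  fixes e Y
  assumes e: "e \<in> Es" and Y: "Y \<subseteq> Cs"
    and pairwise_co: "\<forall>x\<in>Y. \<forall>y\<in>Y. x \<noteq> y \<longrightarrow> co Cs Es G x y"
    and post_or_co: "\<forall>y\<in>Y. y \<in> post G e \<or> co Cs Es G y e"
begin

lemma insert_conflict_free: "\<forall>x\<in>insert e Y. \<forall>y\<in>insert e Y. \<not> conflict Cs G x y"
proof -
  have e_free: "\<not> conflict Cs G e y" if y: "y \<in> Y" for y
  proof
    assume conflict: "conflict Cs G e y"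
    have "y \<in> post G e \<or> co Cs Es G y e" using post_or_co y by blast
    then show False
    proof
      assume "y \<in> post G e"
      then have "conflict Cs G y y"
        using conflict_rtrancl_mono[OF conflict r_into_rtrancl[OF mem_post[THEN iffD1]] rtrancl_refl] by blast
      then show False using no_self_conflict y Y by blast
    qed (use conflict coD conflict_sym in blast)
  qed
  have Y_free: "\<not> conflict Cs G x y" if "x \<in> Y" "y \<in> Y" for x y
  proof (cases "x = y")
    case True then show ?thesis using no_self_conflict that Y by blast
  qed (use pairwise_co that coD in blast)
  show ?thesis using e_free Y_free no_self_conflict e conflict_sym by blast
qed

lemma maximal_in_past_events: "\<forall>f\<in>past_events (insert e Y). (e, f) \<notin> G\<^sup>+"
proof (intro ballI notI)
  fix f assume "f \<in> past_events (insert e Y)" and ef: "(e, f) \<in> G\<^sup>+"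
  then obtain z where f: "f \<in> Es" "z \<in> insert e Y" "(f, z) \<in> G\<^sup>*"
    by (auto simp: past_events_def)
  have ez: "(e, z) \<in> G\<^sup>+" using ef f(3) by (rule trancl_rtrancl_trancl)
  show False
  proof (cases "z \<in> post G e")
    case True
    then have zC: "z \<in> Cs" using post_subset_conds e by blast
    have "(f, e) \<in> G\<^sup>*"
      using trancl_into_cond[OF event_cond_trancl[OF f(3) f(1) zC] mem_post[THEN iffD1, OF True] zC] .
    then show False using ef trancl_irrefl by (meson trancl_rtrancl_trancl)
  next
    case False
    then have "z = e \<or> co Cs Es G z e" using post_or_co f(2) by blast
    then show False using ez trancl_irrefl coD by blast
  qed
qed

lemma subset_Cut_past_events: "Y \<subseteq> Cut Cs G (past_events (insert e Y))"
proof
  fix y assume y: "y \<in> Y"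
  have yC: "y \<in> Cs" using y Y by auto
  have "y \<in> Min_conds Cs G \<union> post_set G (past_events (insert e Y))"
  proof (cases "pre G y = {}")
    case True then show ?thesis using yC by (simp add: Min_conds_def)
  next
    case False
    then obtain g where g: "(g, y) \<in> G" by (auto simp: pre_def)
    have "g \<in> past_events (insert e Y)"
      using arc_to_cond[OF g yC] g y by (auto simp: past_events_def)
    then show ?thesis using g by (auto simp: post_set_def post_def)
  qed
  moreover have "y \<notin> pre_set G (past_events (insert e Y))"
  proof
    assume "y \<in> pre_set G (past_events (insert e Y))"
    then obtain f z where "(y, f) \<in> G" "z \<in> insert e Y" "(f, z) \<in> G\<^sup>*"
      by (auto simp: pre_set_def pre_def past_events_def)
    then have yz: "(y, z) \<in> G\<^sup>+" by (meson rtrancl_into_trancl2)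
    show False
    proof (cases "z = e")
      case True
      have "y \<in> post G e \<or> co Cs Es G y e" using post_or_co y by blast
      then show False
      proof
        assume "y \<in> post G e"
        then have "(e, e) \<in> G\<^sup>+" using trancl_into_trancl2[OF mem_post[THEN iffD1] yz] True by simp
        then show False using trancl_irrefl by blast
      qed (use yz True coD in blast)
    next
      case False
      then have "z \<in> Y" using \<open>z \<in> insert e Y\<close> by blast
      then show False using yz pairwise_co y coD[of y z] trancl_irrefl[of y] by (cases "y = z") auto
    qed
  qed
  ultimately show "y \<in> Cut Cs G (past_events (insert e Y))" by (simp add: Cut_def)
qed

end

end

context safe_unfolding begin

text \<open>All events below \<open>e\<close> and \<open>Y\<close> form a configuration in which \<open>e\<close> is maximal and whose cut
  contains \<open>Y\<close>.\<close>
lemma tar_of_concurrent_conditions: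
  assumes e: "e \<in> Es" and Y: "finite Y" "Y \<subseteq> Cs"
    and pairwise_co: "\<forall>x\<in>Y. \<forall>y\<in>Y. x \<noteq> y \<longrightarrow> co Cs Es G x y"
    and post_or_co: "\<forall>y\<in>Y. y \<in> post G e \<or> co Cs Es G y e"
    and t: "t \<in> T" and enabled: "pre F t \<subseteq> h ` Y"
  shows "tar T F M0 (h e) t"
proof -
  note conflict_free = insert_conflict_free[OF e Y(2) pairwise_co post_or_co]
  have "finite (insert e Y)" "insert e Y \<subseteq> Cs \<union> Es" using Y e by auto
  note K = past_events_config[OF this conflict_free]
  have "e \<in> past_events (insert e Y)" using e by (auto simp: past_events_def)
  moreover note maximal_in_past_events[OF e Y(2) pairwise_co post_or_co]
  moreover have "pre F t \<subseteq> h ` Cut Cs G (past_events (insert e Y))"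
    using enabled subset_Cut_past_events[OF e Y(2) pairwise_co post_or_co] by blast
  ultimately show ?thesis using tar_of_maximal_event[OF K _ _ t] by blast
qed

lemma tar_of_co_events:
  assumes e1: "e1 \<in> Es" and e2: "e2 \<in> Es" and ne: "e1 \<noteq> e2" and co: "co Cs Es G e1 e2"
  shows "tar T F M0 (h e1) (h e2)"
proof (rule tar_of_concurrent_conditions[OF e1 _ pre_subset_conds[OF e2]])
  show "finite (pre G e2)"
    using bij_betw_finite[OF pre_bij[OF e2]] finite_pre_trans[OF label_event[OF e2]] by simp
  show "\<forall>x\<in>pre G e2. \<forall>y\<in>pre G e2. x \<noteq> y \<longrightarrow> co Cs Es G x y"
    using pre_pairwise_co[OF e2] by blast
  show "\<forall>y\<in>pre G e2. y \<in> post G e1 \<or> co Cs Es G y e1"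
    using co_pre_of_co[OF e1 e2 ne co] by blast
qed (use label_event[OF e2] image_pre[OF e2] in auto)

text \<open>The configuration \<open>[e2] - {e2}\<close> witnesses Max-Event Adjacency \<open>e1 \<triangleright> e2\<close>.\<close>
lemma max_adj_config:
  assumes e1: "e1 \<in> Es" and e2: "e2 \<in> Es" and lt: "(e1, e2) \<in> G\<^sup>+"
    and max: "\<forall>e\<in>pre_set G (pre G e2). (e1, e) \<notin> G\<^sup>+"
  defines "K \<equiv> lconf Es G e2 - {e2}"
  shows "finite K" "cfg K" "e1 \<in> K" "\<forall>f\<in>K. (e1, f) \<notin> G\<^sup>+" "pre G e2 \<subseteq> Cut Cs G K"
proof -
  have e2_max: "\<forall>f\<in>lconf Es G e2. (e2, f) \<notin> G\<^sup>+" using lconf_maximal[OF e2] by blast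
  show "finite K" using finite_lconf[OF e2] K_def by simp
  show "cfg K"
    unfolding K_def using config_remove_maximal[OF config_lconf[OF e2] lconf_self[OF e2] e2_max] .
  show "pre G e2 \<subseteq> Cut Cs G K"
    unfolding K_def using pre_maximal_subset_Cut[OF config_lconf[OF e2] lconf_self[OF e2] e2_max] .
  show "e1 \<in> K" using e1 lt trancl_irrefl K_def by (auto simp: lconf_def lt_def)
  show "\<forall>f\<in>K. (e1, f) \<notin> G\<^sup>+"
  proof (intro ballI notI)
    fix f assume "f \<in> K" and ef: "(e1, f) \<in> G\<^sup>+"
    then have fE: "f \<in> Es" and fe: "(f, e2) \<in> G\<^sup>+" using K_def by (auto simp: lconf_def lt_def)
    obtain c where fc: "(f, c) \<in> G\<^sup>*" and ce: "(c, e2) \<in> G" using fe by (blast dest: tranclD2)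
    have cC: "c \<in> Cs" using arc_to_event[OF ce e2] .
    obtain g where fg: "(f, g) \<in> G\<^sup>*" and gc: "(g, c) \<in> G"
      using event_cond_trancl[OF fc fE cC] by (blast dest: tranclD2)
    have "g \<in> pre_set G (pre G e2)" using gc ce by (auto simp: pre_set_def pre_def)
    moreover have "(e1, g) \<in> G\<^sup>+" using ef fg by (rule trancl_rtrancl_trancl)
    ultimately show False using max by blast
  qed
qed

lemma tar_of_max_adj:
  assumes e1: "e1 \<in> Es" and e2: "e2 \<in> Es" and lt: "(e1, e2) \<in> G\<^sup>+"
    and max: "\<forall>e\<in>pre_set G (pre G e2). (e1, e) \<notin> G\<^sup>+"
  shows "tar T F M0 (h e1) (h e2)"
proof -
  note K = max_adj_config[OF e1 e2 lt max]
  have "pre F (h e2) \<subseteq> h ` Cut Cs G (lconf Es G e2 - {e2})"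
    using image_pre[OF e2] K(5) by blast
  then show ?thesis using tar_of_maximal_event[OF K(1-4) label_event[OF e2]] by simp
qed

text \<open>The partners of the postconditions of \<open>e1\<close> lie in the cut of \<open>[e1']\<close> and carry the same
  places, and \<open>h\<close> is injective on that cut.\<close>
lemma future_rel_post_lconf:
  assumes e1: "e1 \<in> Es" and e1': "e1' \<in> Es"
    and equiv: "mark_equivalent (lconf Es G e1') (lconf Es G e1)"
    and posts: "h ` post G e1' = h ` post G e1"
    and c: "c \<in> post G e1" and rel: "future_rel (lconf Es G e1') (lconf Es G e1) c' c" and c'C: "c' \<in> Cs"
  shows "c' \<in> post G e1'"
proof -
  let ?X1 = "lconf Es G e1'" and ?X2 = "lconf Es G e1"
  note X = mark_equivalent_configs[OF equiv]
  have c_cut: "c \<in> Cut Cs G ?X2" using post_subset_Cut_lconf[OF e1] c by blast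
  have c'_cut: "c' \<in> Cut Cs G ?X1"
    using future_rel_cond[OF equiv rel c'C]
  proof
    assume "\<exists>f g. future_rel ?X1 ?X2 f g \<and> f \<in> ext ?X1 \<and> g \<in> ext ?X2 \<and> c' \<in> post G f \<and> c \<in> post G g"
    then obtain g where "g \<in> ext ?X2" "c \<in> post G g" by blast
    then show ?thesis using Cut_disjoint_post_ext[OF X(2) c_cut] by blast
  qed blast
  have "h c \<in> h ` post G e1'" using posts c by blast
  then obtain d where d: "d \<in> post G e1'" "h c = h d" by blast
  have inj: "inj_on h (Cut Cs G ?X1)" using reachable_Cut_marking[OF X(3,1)] by blast
  have "h c' = h d" using future_rel_label[OF rel] d(2) by simp
  then have "c' = d" using inj_onD[OF inj] c'_cut post_subset_Cut_lconf[OF e1'] d(1) by blast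
  then show ?thesis using d(1) by simp
qed

lemma transport_keeps_maximal:
  assumes e1: "e1 \<in> Es" and e1': "e1' \<in> Es"
    and equiv: "mark_equivalent (lconf Es G e1') (lconf Es G e1)"
    and posts: "h ` post G e1' = h ` post G e1"
    and K: "cfg K" "lconf Es G e1' \<subseteq> K" and max: "\<forall>f\<in>K. (e1', f) \<notin> G\<^sup>+"
    and K2: "cfg K2" "lconf Es G e1 \<subseteq> K2"
    and events: "rel_set (future_rel (lconf Es G e1') (lconf Es G e1)) (K - lconf Es G e1') (K2 - lconf Es G e1)"
  shows "\<forall>g\<in>K2. (e1, g) \<notin> G\<^sup>+"
proof (intro ballI notI)
  let ?X1 = "lconf Es G e1'" and ?X2 = "lconf Es G e1"
  fix g assume g: "g \<in> K2" and e1g: "(e1, g) \<in> G\<^sup>+"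
  obtain c where e1c: "(e1, c) \<in> G" and "(c, g) \<in> G\<^sup>*" using e1g by (blast dest: tranclD)
  have c: "c \<in> post G e1" using e1c by (simp add: post_def)
  have cC: "c \<in> Cs" using arc_from_event[OF e1c e1] .
  have "g \<in> Es" using g config_subset_events[OF K2(1)] by blast
  then have "(c, g) \<in> G\<^sup>+"
    using rtrancl_neq_trancl[OF \<open>(c, g) \<in> G\<^sup>*\<close>] cC conds_events_disjoint by blast
  then obtain g' where cg': "(c, g') \<in> G" and g'g: "(g', g) \<in> G\<^sup>*" by (blast dest: tranclD)
  have g'E: "g' \<in> Es" using arc_from_cond[OF cg' cC] .
  have "g' \<in> K2" using config_downward_rtrancl[OF K2(1) g g'E g'g] .
  moreover have "g' \<notin> ?X2" using lconf_maximal[OF e1] e1c cg' by (meson trancl.intros)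
  ultimately obtain f' where f': "f' \<in> K - ?X1" "future_rel ?X1 ?X2 f' g'"
    using rel_setD2[OF events] by blast
  have f'E: "f' \<in> Es" using f' config_subset_events[OF K(1)] by blast
  obtain c' where c': "c' \<in> pre G f'" "future_rel ?X1 ?X2 c' c"
    using rel_setD2[OF future_rel_pre[OF equiv f'(2) f'E]] cg' by (auto simp: pre_def)
  have "c' \<in> post G e1'"
    using future_rel_post_lconf[OF e1 e1' equiv posts c c'(2)] c'(1) pre_subset_conds[OF f'E] by blast
  then have "(e1', c') \<in> G" "(c', f') \<in> G" using c'(1) by (auto simp: post_def pre_def)
  then have "(e1', f') \<in> G\<^sup>+" by (rule trancl_into_trancl2[OF _ r_into_trancl])
  then show False using max f'(1) by blast
qed

text \<open>A cut-off event \<open>e1\<close> inherits the adjacencies of its corresponding event \<open>e1'\<close>.\<close>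
lemma tar_of_cutoff_max_adj:
  assumes e1: "e1 \<in> Es" and e1': "e1' \<in> Es" and e2: "e2 \<in> Es"
    and marks: "h ` Cut Cs G (lconf Es G e1') = h ` Cut Cs G (lconf Es G e1)"
    and posts: "h ` post G e1' = h ` post G e1"
    and lt: "(e1', e2) \<in> G\<^sup>+" and max: "\<forall>e\<in>pre_set G (pre G e2). (e1', e) \<notin> G\<^sup>+"
  shows "tar T F M0 (h e1) (h e2)"
proof -
  let ?X1 = "lconf Es G e1'" and ?X2 = "lconf Es G e1" and ?K = "lconf Es G e2 - {e2}"
  note K = max_adj_config[OF e1' e2 lt max]
  have equiv: "mark_equivalent ?X1 ?X2"
    using marks config_lconf finite_lconf e1 e1' by (simp add: mark_equivalent_def)
  have X1K: "?X1 \<subseteq> ?K" using lconf_subset_config[OF K(2,3)] .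
  obtain K2 where K2: "finite K2" "cfg K2" "?X2 \<subseteq> K2"
    and events: "rel_set (future_rel ?X1 ?X2) (?K - ?X1) (K2 - ?X2)"
    and cuts: "rel_set (future_rel ?X1 ?X2) (Cut Cs G ?K) (Cut Cs G K2)"
    using future_rel_extension[OF equiv K(1,2) X1K] by blast
  have maximal: "\<forall>g\<in>K2. (e1, g) \<notin> G\<^sup>+"
    using transport_keeps_maximal[OF e1 e1' equiv posts K(2) X1K K(4) K2(2,3) events] .
  have e1K2: "e1 \<in> K2" using lconf_self[OF e1] K2(3) by blast
  have "h ` Cut Cs G ?K = h ` Cut Cs G K2"
    by (rule rel_set_image_eq[OF cuts, where f = h]) (rule future_rel_label)
  then have "pre F (h e2) \<subseteq> h ` Cut Cs G K2"
    using image_mono[OF K(5), of h] image_pre[OF e2] by simp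
  then show ?thesis using tar_of_maximal_event[OF K2(1,2) e1K2 maximal label_event[OF e2]] by simp
qed

end

context safe_unfolding begin

lemma mem_improved_iff:
  "(t1, t2) \<in> improved T F Cs Es G h prec \<longleftrightarrow>
     t1 \<in> T \<and> t2 \<in> post_set F (post F t1) \<and>
       (early_confirm Cs Es G h prec (Es \<inter> pnodes prec) (parcs prec) t1 t2 \<or>
        check_by_cuts F h (Cs \<inter> pnodes prec) (Es \<inter> pnodes prec) (parcs prec) t1 t2) \<or>
     (\<exists>e1\<in>Es \<inter> pnodes prec. \<exists>e2\<in>Es \<inter> pnodes prec.
        e1 \<noteq> e2 \<and> co Cs Es G e1 e2 \<and> h e1 = t1 \<and> h e2 = t2)"
proof -
  let ?Ep = "Es \<inter> pnodes prec" and ?co = "co (Cs \<inter> pnodes prec) (Es \<inter> pnodes prec) (parcs prec)"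
  have co: "?co e1 e2 \<longleftrightarrow> co Cs Es G e1 e2" if "e1 \<in> ?Ep" "e2 \<in> ?Ep" for e1 e2
    using co_parcs that by blast
  have "(\<exists>e1 e2. (t1, t2) = (h e2, h e1) \<and> e1 \<in> ?Ep \<and> e2 \<in> ?Ep \<and> e1 \<noteq> e2 \<and> ?co e1 e2) \<longleftrightarrow>
      (\<exists>e1 e2. (t1, t2) = (h e1, h e2) \<and> e1 \<in> ?Ep \<and> e2 \<in> ?Ep \<and> e1 \<noteq> e2 \<and> ?co e1 e2)"
    using co co_sym by metis
  moreover have "(\<exists>e1 e2. (t1, t2) = (h e1, h e2) \<and> e1 \<in> ?Ep \<and> e2 \<in> ?Ep \<and> e1 \<noteq> e2 \<and> ?co e1 e2) \<longleftrightarrow>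
     (\<exists>e1\<in>?Ep. \<exists>e2\<in>?Ep. e1 \<noteq> e2 \<and> co Cs Es G e1 e2 \<and> h e1 = t1 \<and> h e2 = t2)"
    using co by auto
  ultimately show ?thesis unfolding improved_def Let_def by blast
qed

lemma tar_if_early_confirm:
  assumes "early_confirm Cs Es G h prec (Es \<inter> pnodes prec) (parcs prec) t1 t2"
  shows "tar T F M0 t1 t2"
proof -
  obtain e1 where e1: "e1 \<in> Es" "e1 \<in> pnodes prec" "h e1 = t1" and
    cases: "(\<exists>e2\<in>Es \<inter> pnodes prec. h e2 = t2 \<and> max_adj (parcs prec) e1 e2) \<or>
      (\<exists>e1'\<in>Es \<inter> pnodes prec. corresponding Cs Es G h prec e1 e1' \<and>
         h ` post (parcs prec) e1' = h ` post (parcs prec) e1 \<and>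
         (\<exists>e2\<in>Es \<inter> pnodes prec. h e2 = t2 \<and> max_adj (parcs prec) e1' e2))"
    using assms unfolding early_confirm_def by blast
  from cases show ?thesis
  proof
    assume "\<exists>e2\<in>Es \<inter> pnodes prec. h e2 = t2 \<and> max_adj (parcs prec) e1 e2"
    then obtain e2 where e2: "e2 \<in> Es" "e2 \<in> pnodes prec" "h e2 = t2" "max_adj (parcs prec) e1 e2"
      by blast
    show ?thesis
      using tar_of_max_adj[OF e1(1) e2(1) max_adj_parcs[OF e1(2) e2(2,4)]] e1(3) e2(3) by simp
  next
    assume "\<exists>e1'\<in>Es \<inter> pnodes prec. corresponding Cs Es G h prec e1 e1' \<and>
      h ` post (parcs prec) e1' = h ` post (parcs prec) e1 \<and>
      (\<exists>e2\<in>Es \<inter> pnodes prec. h e2 = t2 \<and> max_adj (parcs prec) e1' e2)"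
    then obtain e1' e2 where e1': "e1' \<in> Es" "e1' \<in> pnodes prec" "corresponding Cs Es G h prec e1 e1'"
        "h ` post (parcs prec) e1' = h ` post (parcs prec) e1"
      and e2: "e2 \<in> Es" "e2 \<in> pnodes prec" "h e2 = t2" "max_adj (parcs prec) e1' e2" by blast
    have marks: "h ` Cut Cs G (lconf Es G e1') = h ` Cut Cs G (lconf Es G e1)"
      using e1'(3) by (simp add: corresponding_def Mark_def)
    have posts: "h ` post G e1' = h ` post G e1"
      using e1'(4) post_parcs[OF e1'(2,1)] post_parcs[OF e1(2,1)] by simp
    show ?thesis
      using tar_of_cutoff_max_adj[OF e1(1) e1'(1) e2(1) marks posts max_adj_parcs[OF e1'(2) e2(2,4)]]
        e1(3) e2(3) by simp
  qed
qed

lemma tar_if_check_by_cuts: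
  assumes cb: "check_by_cuts F h (Cs \<inter> pnodes prec) (Es \<inter> pnodes prec) (parcs prec) t1 t2"
    and t2: "t2 \<in> T"
  shows "tar T F M0 t1 t2"
proof -
  obtain e1 X where e1: "e1 \<in> Es" "e1 \<in> pnodes prec" "h e1 = t1"
    and X: "X \<subseteq> post (parcs prec) e1 \<union> {c\<in>Cs \<inter> pnodes prec.
        co (Cs \<inter> pnodes prec) (Es \<inter> pnodes prec) (parcs prec) c e1 \<and> h c \<in> pre F t2}"
      "pairwise_co (Cs \<inter> pnodes prec) (Es \<inter> pnodes prec) (parcs prec) X" "pre F t2 \<subseteq> h ` X"
    using cb unfolding check_by_cuts_def Let_def by blast
  note post_e1 = post_parcs[OF e1(2,1)]
  have X_prefix: "X \<subseteq> pnodes prec" and X_conds: "X \<subseteq> Cs"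
    using X(1) post_e1 post_pnodes[OF e1(2,1)] post_subset_conds[OF e1(1)] by auto
  have post_or_co: "\<forall>x\<in>X. x \<in> post G e1 \<or> co Cs Es G x e1"
    using X(1) post_e1 co_parcs[OF _ e1(2)] X_prefix by blast
  have pairwise_co: "\<forall>x\<in>X. \<forall>y\<in>X. x \<noteq> y \<longrightarrow> co Cs Es G x y"
    using X(2) co_parcs X_prefix unfolding pairwise_co_def by blast
  obtain Y where Y: "Y \<subseteq> X" "finite Y" "pre F t2 = h ` Y"
    using finite_subset_image[OF finite_pre_trans[OF t2] X(3)] by blast
  show ?thesis
    using tar_of_concurrent_conditions[OF e1(1) Y(2) _ _ _ t2] Y X_conds post_or_co pairwise_co e1(3)
    by (metis (no_types, lifting) order_refl subset_iff)
qed

lemma improved_subset_tar: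
  "improved T F Cs Es G h prec \<subseteq> {(t1, t2). t1 \<in> T \<and> t2 \<in> T \<and> tar T F M0 t1 t2}"
proof (clarify)
  fix t1 t2 assume "(t1, t2) \<in> improved T F Cs Es G h prec"
  then consider
      "t1 \<in> T" "t2 \<in> post_set F (post F t1)"
      "early_confirm Cs Es G h prec (Es \<inter> pnodes prec) (parcs prec) t1 t2 \<or>
       check_by_cuts F h (Cs \<inter> pnodes prec) (Es \<inter> pnodes prec) (parcs prec) t1 t2"
    | e1 e2 where "e1 \<in> Es" "e2 \<in> Es" "e1 \<noteq> e2" "co Cs Es G e1 e2" "h e1 = t1" "h e2 = t2"
    unfolding mem_improved_iff by blast
  then show "t1 \<in> T \<and> t2 \<in> T \<and> tar T F M0 t1 t2"
  proof cases
    case 1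
    then obtain p where "p \<in> post F t1" "t2 \<in> post F p" by (auto simp: post_set_def)
    then have t2: "t2 \<in> T" using post_trans_places[OF 1(1)] post_place_trans by blast
    then show ?thesis using 1 tar_if_early_confirm tar_if_check_by_cuts by blast
  next
    case 2
    then show ?thesis using tar_of_co_events label_event by blast
  qed
qed

end

section \<open>Completeness: every adjacent pair is returned\<close>

context safe_unfolding begin

lemma tar_witness_in_prefix:
  assumes adequate: "adequate_order Cs Es G h prec" and tar: "tar T F M0 t1 t2"
  obtains C e1 where "finite C" "cfg C" "\<forall>e\<in>C. \<not> cutoff Cs Es G h prec e"
    "inj_on h (Cut Cs G C)" "e1 \<in> Es" "h e1 = t1" "pre G e1 \<subseteq> Cut Cs G C"
    "pre F t2 \<subseteq> h ` Cut Cs G (insert e1 C)"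
proof -
  obtain M where M: "M \<in> reach T F M0" "enabled T F M t1" "enabled T F (fire F M t1) t2"
    using tar by (auto simp: tar_def)
  obtain K where K: "finite K" "cfg K" "M = marking_of (h ` Cut Cs G K)"
    using reachable_marking_Cut[OF M(1)] by blast
  obtain C where C: "finite C" "cfg C" "h ` Cut Cs G C = h ` Cut Cs G K"
    and no_cutoff: "\<forall>e\<in>C. \<not> cutoff Cs Es G h prec e"
    using cutoff_free_config_exists[OF adequate K(1,2)] by blast
  have M_C: "M = marking_of (h ` Cut Cs G C)" using K(3) C(3) by simp
  have inj: "inj_on h (Cut Cs G C)" using reachable_Cut_marking[OF C(1,2)] by blast
  have t1: "t1 \<in> T" and "pre F t1 \<subseteq> h ` Cut Cs G C"
    using M(2) M_C by (auto simp: enabled_def split: if_splits)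
  then obtain e1 where e1: "e1 \<in> Es" "h e1 = t1" "pre G e1 = Cut Cs G C \<inter> h -` pre F t1"
    using enabled_event_exists[OF C(2) inj] by blast
  then have enabled: "pre G e1 \<subseteq> Cut Cs G C" by blast
  have "fire F M t1 = marking_of (h ` Cut Cs G (insert e1 C))"
    using fire_enabled_event(2)[OF C(2) e1(1) enabled inj] M_C e1(2) M(1) by simp
  then have "pre F t2 \<subseteq> h ` Cut Cs G (insert e1 C)"
    using M(3) by (auto simp: enabled_def split: if_splits)
  then show thesis using that C(1,2) no_cutoff inj e1(1,2) enabled by blast
qed

text \<open>The postconditions of \<open>e1\<close> and the conditions of the cut carrying \<open>\<bullet>t2\<close> are pairwise
  concurrent; by Zorn's lemma they extend to a maximal such set inside \<open>Bprec\<close>.\<close>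
lemma check_by_cuts_of_witness:
  assumes C: "cfg C" "\<forall>e\<in>C. \<not> cutoff Cs Es G h prec e"
    and e1: "e1 \<in> Es" and enabled: "pre G e1 \<subseteq> Cut Cs G C"
    and sub: "pre F t2 \<subseteq> h ` Cut Cs G (insert e1 C)"
  shows "check_by_cuts F h (Cs \<inter> pnodes prec) (Es \<inter> pnodes prec) (parcs prec) (h e1) t2"
proof -
  let ?Cp = "Cs \<inter> pnodes prec" and ?Ep = "Es \<inter> pnodes prec"
  let ?co = "co ?Cp ?Ep (parcs prec)" and ?K = "insert e1 C"
  define Bprec where "Bprec = post (parcs prec) e1 \<union> {c\<in>?Cp. ?co c e1 \<and> h c \<in> pre F t2}"
  define X0 where "X0 = post G e1 \<union> {c\<in>Cut Cs G ?K. h c \<in> pre F t2}"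
  note prefix = Cut_insert_subset_pnodes[OF C e1 enabled]
  have cut: "Cut Cs G ?K = (Cut Cs G C - pre G e1) \<union> post G e1"
    using Cut_insert_enabled[OF C(1) e1 enabled] .
  have X0_cut: "X0 \<subseteq> Cut Cs G ?K" using cut X0_def by blast
  have X0_prefix: "X0 \<subseteq> pnodes prec" using X0_cut prefix(2) by blast
  have e1_prefix: "e1 \<in> pnodes prec" using prefix(1) by blast
  have pairwise: "pairwise ?co X0"
    unfolding pairwise_def
  proof (intro ballI impI)
    fix x y assume x: "x \<in> X0" and y: "y \<in> X0"
    then have "co Cs Es G x y"
      using Cut_pairwise_co[OF config_insert_enabled[OF C(1) e1 enabled]] X0_cut by blast
    then show "?co x y" using co_parcs x y X0_prefix by blast
  qed
  have X0_Bprec: "X0 \<subseteq> Bprec"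
  proof
    fix c assume c: "c \<in> X0"
    then have "c \<in> post G e1 \<or> co Cs Es G c e1"
      using Cut_insert_enabled_post_or_co[OF C(1) e1 enabled] X0_cut by blast
    moreover have "c \<in> Cs" using Cut_subset_conds[OF config_insert_enabled[OF C(1) e1 enabled]] c X0_cut
      by blast
    ultimately show "c \<in> Bprec"
      using post_parcs[OF e1_prefix e1] co_parcs[OF _ e1_prefix] X0_prefix c X0_def Bprec_def by auto
  qed
  obtain X where X: "X0 \<subseteq> X" "X \<subseteq> Bprec" "pairwise ?co X"
    "\<And>Y. X \<subset> Y \<Longrightarrow> Y \<subseteq> Bprec \<Longrightarrow> \<not> pairwise ?co Y"
    using maximal_pairwise_superset[OF X0_Bprec pairwise] by blast
  have "pre F t2 \<subseteq> h ` X0" using sub X0_def by blast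
  then have cover: "pre F t2 \<subseteq> h ` X" using X(1) by blast
  have pairwise_co: "pairwise_co ?Cp ?Ep (parcs prec) Y \<longleftrightarrow> pairwise ?co Y" for Y
    by (simp add: pairwise_co_def pairwise_def)
  have "\<exists>X\<subseteq>Bprec. pairwise_co ?Cp ?Ep (parcs prec) X \<and>
      (\<forall>Y. X \<subset> Y \<and> Y \<subseteq> Bprec \<longrightarrow> \<not> pairwise_co ?Cp ?Ep (parcs prec) Y) \<and> pre F t2 \<subseteq> h ` X"
    by (intro exI[of _ X] conjI allI impI) (use X cover pairwise_co in auto)
  then show ?thesis unfolding check_by_cuts_def Let_def Bprec_def using e1 e1_prefix by (intro bexI[of _ e1]) auto
qed

lemma co_event_of_witness:
  assumes C: "cfg C" "\<forall>e\<in>C. \<not> cutoff Cs Es G h prec e" and inj: "inj_on h (Cut Cs G C)"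
    and e1: "e1 \<in> Es" and enabled: "pre G e1 \<subseteq> Cut Cs G C"
    and t2: "t2 \<in> T" and sub: "pre F t2 \<subseteq> h ` Cut Cs G (insert e1 C)"
    and independent: "pre F t2 \<inter> post F (h e1) = {}"
  obtains e2 where "e2 \<in> Es" "e2 \<in> pnodes prec" "e1 \<noteq> e2" "co Cs Es G e1 e2" "h e2 = t2"
proof -
  have sub': "pre F t2 \<subseteq> h ` (Cut Cs G C - pre G e1)"
    using sub Cut_insert_enabled[OF C(1) e1 enabled] independent image_post[OF e1]
    by (auto simp: image_Un)
  then obtain e2 where e2: "e2 \<in> Es" "h e2 = t2" "pre G e2 = Cut Cs G C \<inter> h -` pre F t2"
    using enabled_event_exists[OF C(1) inj t2] by blast
  have enabled2: "pre G e2 \<subseteq> Cut Cs G C" using e2(3) by blast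
  have disjoint: "pre G e1 \<inter> pre G e2 = {}"
  proof -
    { fix c assume c: "c \<in> pre G e1" "c \<in> pre G e2"
      then have "h c \<in> pre F t2" using e2(3) by blast
      then obtain c' where c': "c' \<in> Cut Cs G C - pre G e1" "h c' = h c" using sub' by force
      then have "c' = c" using inj_onD[OF inj] enabled c(1) by blast
      then have False using c c' by blast }
    then show ?thesis by blast
  qed
  have "e1 \<noteq> e2" using disjoint pre_event_nonempty[OF e1] by auto
  moreover have "co Cs Es G e1 e2" using co_enabled_events[OF C(1) e1 e2(1) enabled enabled2 disjoint] .
  moreover have "e2 \<in> pnodes prec" using Cut_insert_subset_pnodes(1)[OF C e2(1) enabled2] by blast
  ultimately show thesis using that e2(1,2) by blast
qed

lemma tar_subset_improved:
  assumes adequate: "adequate_order Cs Es G h prec"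
  shows "{(t1, t2). t1 \<in> T \<and> t2 \<in> T \<and> tar T F M0 t1 t2} \<subseteq> improved T F Cs Es G h prec"
proof (clarify)
  fix t1 t2 assume t1: "t1 \<in> T" and t2: "t2 \<in> T" and tar: "tar T F M0 t1 t2"
  obtain C e1 where C: "finite C" "cfg C" "\<forall>e\<in>C. \<not> cutoff Cs Es G h prec e"
    and inj: "inj_on h (Cut Cs G C)" and e1: "e1 \<in> Es" "h e1 = t1"
    and enabled: "pre G e1 \<subseteq> Cut Cs G C" and sub: "pre F t2 \<subseteq> h ` Cut Cs G (insert e1 C)"
    using tar_witness_in_prefix[OF adequate tar] by blast
  have e1_prefix: "e1 \<in> pnodes prec" using Cut_insert_subset_pnodes(1)[OF C(2,3) e1(1) enabled] by blast
  show "(t1, t2) \<in> improved T F Cs Es G h prec"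
  proof (cases "t2 \<in> post_set F (post F t1)")
    case True
    then show ?thesis
      unfolding mem_improved_iff
      using check_by_cuts_of_witness[OF C(2,3) e1(1) enabled sub] t1 e1(2) by blast
  next
    case False
    then have "pre F t2 \<inter> post F (h e1) = {}" using e1(2) by (auto simp: pre_def post_def post_set_def)
    then obtain e2 where "e2 \<in> Es" "e2 \<in> pnodes prec" "e1 \<noteq> e2" "co Cs Es G e1 e2" "h e2 = t2"
      using co_event_of_witness[OF C(2,3) inj e1(1) enabled t2 sub] by blast
    then show ?thesis unfolding mem_improved_iff using e1 e1_prefix by blast
  qed
qed

end

theorem proposition7:
  fixes P T :: "'a set" and F :: "('a \<times> 'a) set" and M0 :: "'a \<Rightarrow> nat"
    and Cs Es :: "'n set" and G :: "('n \<times> 'n) set" and h :: "'n \<Rightarrow> 'a"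
    and prec :: "'n set \<Rightarrow> 'n set \<Rightarrow> bool"
  assumes "net_system P T F M0"
    and "one_safe T F M0"
    and "is_unfolding P T F M0 Cs Es G h"
    and "adequate_order Cs Es G h prec"
  shows "improved T F Cs Es G h prec = {(t1, t2). t1 \<in> T \<and> t2 \<in> T \<and> tar T F M0 t1 t2}"
proof -
  interpret safe_unfolding P T F M0 Cs Es G h
    using assms(1-3) by unfold_locales
  show ?thesis using improved_subset_tar tar_subset_improved[OF assms(4)] by (rule subset_antisym)
qed

end
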